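(* Fix finite nonempty sets $A$ and $\Omega$, a prior $\mu_0$ on $\Omega$ with $\mu_0(\omega)>0$ for all $\omega$, and a finite message set $M$ with $|M|>\max\{|\Omega|,|A|\}$. There is a set of environments of Lebesgue measure one in $[0,1]^{2|A||\Omega|}$ such that, for every environment in this set: if cheap-talk Sender values randomization, then commitment is valuable.
   Context: An environment is a pair $(u_S,u_R)$ of functions $A\times\Omega\to[0,1]$, identified with a point of $[0,1]^{2|A||\Omega|}$. A messaging strategy is $\sigma:\Omega\to\Delta M$ and an action strategy is $\rho:M\to\Delta A$. For $i\in\{S,R\}$, $U_i(\sigma,\rho)=\sum_{\omega,m,a}\mu_0(\omega)\sigma(m|\omega)\rho(a|m)u_i(a,\omega)$. A profile $(\sigma,\rho)$ is S-BR if $\sigma\in\arg\max_{\sigma'}U_S(\sigma',\rho)$, and R-BR if $\rho\in\arg\max_{\rho'}U_R(\sigma,\rho')$. A persuasion profile is an R-BR profile; the persuasion payoff is the maximum of $U_S$ over persuasion profiles. A cheap-talk equilibrium is an S-BR and R-BR profile; the cheap-talk payoff is the maximum of $U_S$ over cheap-talk equilibria. Commitment is valuable if the persuasion payoff strictly exceeds the cheap-talk payoff. $\sigma$ is partitional if for every $\omega$ some $m$ has $\sigma(m|\omega)=1$. The partitional cheap-talk payoff is the maximum of $U_S$ over cheap-talk equilibria with partitional $\sigma$. Cheap-talk Sender values randomization if the cheap-talk payoff strictly exceeds the partitional cheap-talk payoff. *)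

theory Defs
  imports "HOL-Analysis.Analysis"
begin

text \<open>Sender/Receiver game. Actions: type 'a, states: type 'w, messages: type 'm
  (all finite). A utility function is a map 'a \<Rightarrow> 'w \<Rightarrow> real.\<close>

definition is_prior :: "('w::finite \<Rightarrow> real) \<Rightarrow> bool" where
  "is_prior \<mu> \<longleftrightarrow> (\<forall>w. \<mu> w > 0) \<and> (\<Sum>w\<in>UNIV. \<mu> w) = 1"

definition msg_strat :: "('w::finite \<Rightarrow> 'm::finite \<Rightarrow> real) \<Rightarrow> bool" where
  "msg_strat \<sigma> \<longleftrightarrow> (\<forall>w m. \<sigma> w m \<ge> 0) \<and> (\<forall>w. (\<Sum>m\<in>UNIV. \<sigma> w m) = 1)"

definition act_strat :: "('m::finite \<Rightarrow> 'a::finite \<Rightarrow> real) \<Rightarrow> bool" where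
  "act_strat \<rho> \<longleftrightarrow> (\<forall>m a. \<rho> m a \<ge> 0) \<and> (\<forall>m. (\<Sum>a\<in>UNIV. \<rho> m a) = 1)"

definition U :: "('w::finite \<Rightarrow> real) \<Rightarrow> ('a::finite \<Rightarrow> 'w \<Rightarrow> real)
    \<Rightarrow> ('w \<Rightarrow> 'm::finite \<Rightarrow> real) \<Rightarrow> ('m \<Rightarrow> 'a \<Rightarrow> real) \<Rightarrow> real" where
  "U \<mu> u \<sigma> \<rho> = (\<Sum>w\<in>UNIV. \<Sum>m\<in>UNIV. \<Sum>a\<in>UNIV. \<mu> w * \<sigma> w m * \<rho> m a * u a w)"

definition profile :: "('w::finite \<Rightarrow> 'm::finite \<Rightarrow> real) \<Rightarrow> ('m \<Rightarrow> 'a::finite \<Rightarrow> real) \<Rightarrow> bool" where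
  "profile \<sigma> \<rho> \<longleftrightarrow> msg_strat \<sigma> \<and> act_strat \<rho>"

definition S_BR :: "('w::finite \<Rightarrow> real) \<Rightarrow> ('a::finite \<Rightarrow> 'w \<Rightarrow> real)
    \<Rightarrow> ('w \<Rightarrow> 'm::finite \<Rightarrow> real) \<Rightarrow> ('m \<Rightarrow> 'a \<Rightarrow> real) \<Rightarrow> bool" where
  "S_BR \<mu> uS \<sigma> \<rho> \<longleftrightarrow> (\<forall>\<sigma>'. msg_strat \<sigma>' \<longrightarrow> U \<mu> uS \<sigma>' \<rho> \<le> U \<mu> uS \<sigma> \<rho>)"

definition R_BR :: "('w::finite \<Rightarrow> real) \<Rightarrow> ('a::finite \<Rightarrow> 'w \<Rightarrow> real)
    \<Rightarrow> ('w \<Rightarrow> 'm::finite \<Rightarrow> real) \<Rightarrow> ('m \<Rightarrow> 'a \<Rightarrow> real) \<Rightarrow> bool" where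
  "R_BR \<mu> uR \<sigma> \<rho> \<longleftrightarrow> (\<forall>\<rho>'. act_strat \<rho>' \<longrightarrow> U \<mu> uR \<sigma> \<rho>' \<le> U \<mu> uR \<sigma> \<rho>)"

definition partitional :: "('w::finite \<Rightarrow> 'm::finite \<Rightarrow> real) \<Rightarrow> bool" where
  "partitional \<sigma> \<longleftrightarrow> (\<forall>w. \<exists>m. \<sigma> w m = 1)"

text \<open>Payoffs are maxima over the relevant sets of profiles; they are written as
  suprema (the maxima are attained by compactness and continuity).
  The itself-argument fixes the message type.\<close>

definition persuasion_payoff :: "'m::finite itself \<Rightarrow> ('w::finite \<Rightarrow> real)
    \<Rightarrow> ('a::finite \<Rightarrow> 'w \<Rightarrow> real) \<Rightarrow> ('a \<Rightarrow> 'w \<Rightarrow> real) \<Rightarrow> real" where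
  "persuasion_payoff (_::'m itself) \<mu> uS uR =
     Sup {U \<mu> uS \<sigma> \<rho> | (\<sigma>::'w \<Rightarrow> 'm \<Rightarrow> real) \<rho>. profile \<sigma> \<rho> \<and> R_BR \<mu> uR \<sigma> \<rho>}"

definition cheap_talk_payoff :: "'m::finite itself \<Rightarrow> ('w::finite \<Rightarrow> real)
    \<Rightarrow> ('a::finite \<Rightarrow> 'w \<Rightarrow> real) \<Rightarrow> ('a \<Rightarrow> 'w \<Rightarrow> real) \<Rightarrow> real" where
  "cheap_talk_payoff (_::'m itself) \<mu> uS uR =
     Sup {U \<mu> uS \<sigma> \<rho> | (\<sigma>::'w \<Rightarrow> 'm \<Rightarrow> real) \<rho>.
            profile \<sigma> \<rho> \<and> S_BR \<mu> uS \<sigma> \<rho> \<and> R_BR \<mu> uR \<sigma> \<rho>}"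

definition partitional_cheap_talk_payoff :: "'m::finite itself \<Rightarrow> ('w::finite \<Rightarrow> real)
    \<Rightarrow> ('a::finite \<Rightarrow> 'w \<Rightarrow> real) \<Rightarrow> ('a \<Rightarrow> 'w \<Rightarrow> real) \<Rightarrow> real" where
  "partitional_cheap_talk_payoff (_::'m itself) \<mu> uS uR =
     Sup {U \<mu> uS \<sigma> \<rho> | (\<sigma>::'w \<Rightarrow> 'm \<Rightarrow> real) \<rho>.
            profile \<sigma> \<rho> \<and> S_BR \<mu> uS \<sigma> \<rho> \<and> R_BR \<mu> uR \<sigma> \<rho> \<and> partitional \<sigma>}"

definition commitment_valuable :: "'m::finite itself \<Rightarrow> ('w::finite \<Rightarrow> real)
    \<Rightarrow> ('a::finite \<Rightarrow> 'w \<Rightarrow> real) \<Rightarrow> ('a \<Rightarrow> 'w \<Rightarrow> real) \<Rightarrow> bool" where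
  "commitment_valuable M \<mu> uS uR \<longleftrightarrow> persuasion_payoff M \<mu> uS uR > cheap_talk_payoff M \<mu> uS uR"

definition values_randomization :: "'m::finite itself \<Rightarrow> ('w::finite \<Rightarrow> real)
    \<Rightarrow> ('a::finite \<Rightarrow> 'w \<Rightarrow> real) \<Rightarrow> ('a \<Rightarrow> 'w \<Rightarrow> real) \<Rightarrow> bool" where
  "values_randomization M \<mu> uS uR \<longleftrightarrow>
     cheap_talk_payoff M \<mu> uS uR > partitional_cheap_talk_payoff M \<mu> uS uR"

text \<open>An environment is a point of [0,1]^(2|A||Omega|), coordinates indexed by
  ('a \<times> 'w) + ('a \<times> 'w): Inl gives u_S, Inr gives u_R.\<close>

definition env_uS :: "real ^ (('a::finite \<times> 'w::finite) + ('a \<times> 'w)) \<Rightarrow> 'a \<Rightarrow> 'w \<Rightarrow> real" where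
  "env_uS x a w = x $ Inl (a, w)"

definition env_uR :: "real ^ (('a::finite \<times> 'w::finite) + ('a \<times> 'w)) \<Rightarrow> 'a \<Rightarrow> 'w \<Rightarrow> real" where
  "env_uR x a w = x $ Inr (a, w)"

end

theory Submission
  imports Defs
begin

(* For almost every environment the payoff vectors are in general position.  Take a Sender-optimal
   cheap-talk equilibrium and suppose commitment is not valuable, so that it also attains the
   persuasion payoff.  If an on-path message induced a mixed action, we could free a message
   (rescaling along a linear dependency among the |M| > |Omega| message columns), split the mixed
   message into one recommending each action, and tilt its posterior in a direction that keeps
   Receiver obedient but strictly raises Sender's payoff; general position provides the direction.
   Hence on-path actions are pure, and as Sender's preferences are strict in every state, pooling
   the messages by the action they induce gives a partitional equilibrium with the same payoff.
   The non-generic environments are covered by finitely many images of hyperplanes under smooth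
   maps, hence form a null set. *)

section \<open>Lotteries\<close>

definition lottery :: "('a::finite \<Rightarrow> real) \<Rightarrow> bool" where
  "lottery p \<longleftrightarrow> (\<forall>a. 0 \<le> p a) \<and> sum p UNIV = 1"

definition dirac :: "'a \<Rightarrow> 'a \<Rightarrow> real" where
  "dirac x y = (if y = x then 1 else 0)"

lemma msg_strat_iff_lottery: "msg_strat \<sigma> \<longleftrightarrow> (\<forall>w. lottery (\<sigma> w))"
  unfolding msg_strat_def lottery_def by blast

lemma act_strat_iff_lottery: "act_strat \<rho> \<longleftrightarrow> (\<forall>m. lottery (\<rho> m))"
  unfolding act_strat_def lottery_def by blast

lemma lottery_dirac: "lottery (dirac (x::'a::finite))"
  by (simp add: lottery_def dirac_def)

lemma sum_dirac_mult [simp]: "(\<Sum>y\<in>UNIV. dirac (x::'a::finite) y * f y) = f x"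
  by (simp add: dirac_def if_distrib[of "\<lambda>t. t * _"] cong: if_cong)

lemma lottery_nonneg: "lottery p \<Longrightarrow> 0 \<le> p a"
  by (simp add: lottery_def)

lemma lottery_le_one: "lottery p \<Longrightarrow> p a \<le> 1"
  unfolding lottery_def by (metis member_le_sum finite UNIV_I)

lemma lottery_pos_iff: "lottery p \<Longrightarrow> 0 < p a \<longleftrightarrow> p a \<noteq> 0"
  using lottery_nonneg[of p a] by linarith

lemma lottery_ex_pos: "lottery p \<Longrightarrow> \<exists>a. 0 < p a"
  unfolding lottery_def by (metis (no_types) not_less sum_nonpos zero_neq_one order.antisym sum_nonneg)

lemma lottery_eq_dirac:
  assumes "lottery p" and "\<And>b. b \<noteq> a \<Longrightarrow> p b = 0"
  shows "p = dirac a"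
proof -
  have "sum p UNIV = p a"
    using assms(2) by (subst sum.remove[of _ a]) (auto intro: sum.neutral)
  then show ?thesis
    using assms unfolding lottery_def dirac_def by auto
qed

lemma lottery_sum_le:
  assumes "lottery p" and "\<And>a. f a \<le> M"
  shows "(\<Sum>a\<in>UNIV. p a * f a) \<le> M"
proof -
  have "(\<Sum>a\<in>UNIV. p a * f a) \<le> (\<Sum>a\<in>UNIV. p a * M)"
    using assms by (intro sum_mono mult_left_mono) (auto simp: lottery_def)
  also have "\<dots> = M"
    using assms(1) by (simp add: lottery_def sum_distrib_right[symmetric])
  finally show ?thesis .
qed

lemma lottery_sum_eq:
  assumes "lottery p" and "\<And>a. p a \<noteq> 0 \<Longrightarrow> f a = M"
  shows "(\<Sum>a\<in>UNIV. p a * f a) = M"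
proof -
  have "(\<Sum>a\<in>UNIV. p a * f a) = (\<Sum>a\<in>UNIV. p a * M)"
    using assms(2) by (metis mult_zero_left)
  also have "\<dots> = M"
    using assms(1) by (simp add: lottery_def sum_distrib_right[symmetric])
  finally show ?thesis .
qed

lemma lottery_gap_le_sum_gap:
  assumes "lottery p" and "\<And>b. f b \<le> M"
  shows "p a * (M - f a) \<le> M - (\<Sum>b\<in>UNIV. p b * f b)"
proof -
  have "p a * (M - f a) \<le> (\<Sum>b\<in>UNIV. p b * (M - f b))"
    using assms by (intro member_le_sum mult_nonneg_nonneg) (auto simp: lottery_def)
  also have "\<dots> = M - (\<Sum>b\<in>UNIV. p b * f b)"
    using assms(1) by (simp add: lottery_def right_diff_distrib sum_subtractf flip: sum_distrib_right)
  finally show ?thesis .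
qed

lemma lottery_optimal_iff:
  fixes f :: "'a::finite \<Rightarrow> real"
  assumes "lottery p"
  shows "(\<forall>q. lottery q \<longrightarrow> (\<Sum>a\<in>UNIV. q a * f a) \<le> (\<Sum>a\<in>UNIV. p a * f a)) \<longleftrightarrow>
         (\<forall>a b. 0 < p a \<longrightarrow> f b \<le> f a)"
proof -
  define M where "M = Max (range f)"
  have le_M: "f b \<le> M" for b
    unfolding M_def by (rule Max_ge) auto
  have "M \<in> range f"
    unfolding M_def by (rule Max_in) auto
  then obtain c where c: "f c = M"
    by auto
  show ?thesis
  proof
    assume opt: "\<forall>q. lottery q \<longrightarrow> (\<Sum>a\<in>UNIV. q a * f a) \<le> (\<Sum>a\<in>UNIV. p a * f a)"
    show "\<forall>a b. 0 < p a \<longrightarrow> f b \<le> f a"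
    proof (intro allI impI)
      fix a b assume "0 < p a"
      have "M \<le> (\<Sum>b\<in>UNIV. p b * f b)"
        using opt lottery_dirac[of c] c by force
      moreover have "p a * (M - f a) \<le> M - (\<Sum>b\<in>UNIV. p b * f b)"
        by (rule lottery_gap_le_sum_gap[OF assms]) (rule le_M)
      ultimately have "p a * (M - f a) \<le> 0"
        by linarith
      then show "f b \<le> f a"
        using \<open>0 < p a\<close> le_M[of a] le_M[of b] by (simp add: mult_le_0_iff)
    qed
  next
    assume supp: "\<forall>a b. 0 < p a \<longrightarrow> f b \<le> f a"
    have "(\<Sum>a\<in>UNIV. p a * f a) = M"
    proof (rule lottery_sum_eq[OF assms])
      fix a assume "p a \<noteq> 0"
      then show "f a = M"
        using supp le_M[of a] c lottery_pos_iff[OF assms] by (metis order.antisym)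
    qed
    then show "\<forall>q. lottery q \<longrightarrow> (\<Sum>a\<in>UNIV. q a * f a) \<le> (\<Sum>a\<in>UNIV. p a * f a)"
      using lottery_sum_le le_M by metis
  qed
qed

lemma lottery_mean_attained_on_support:
  assumes "lottery p" and "\<And>b. 0 < p b \<Longrightarrow> f b \<le> (\<Sum>c\<in>UNIV. p c * f c)" and "0 < p a"
  shows "f a = (\<Sum>c\<in>UNIV. p c * f c)"
proof -
  define s where "s = (\<Sum>c\<in>UNIV. p c * f c)"
  have "p b * (s - f b) \<ge> 0" for b
    using assms(2)[of b] lottery_pos_iff[OF assms(1), of b] unfolding s_def
    by (cases "p b = 0") auto
  moreover have "(\<Sum>b\<in>UNIV. p b * (s - f b)) = 0"
    using assms(1) by (simp add: s_def lottery_def algebra_simps sum_subtractf sum_distrib_right[symmetric])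
  ultimately have "p a * (s - f a) = 0"
    by (simp add: sum_nonneg_eq_0_iff)
  then show ?thesis
    using assms(3) by (simp add: s_def)
qed

lemma sum_UNIV_fun_upd:
  fixes F :: "'k::finite \<Rightarrow> 'b::ab_group_add"
  shows "(\<Sum>k\<in>UNIV. (F(m := y)) k) = (\<Sum>k\<in>UNIV. F k) - F m + y"
proof -
  have "(\<Sum>k\<in>UNIV - {m}. (F(m := y)) k) = (\<Sum>k\<in>UNIV - {m}. F k)"
    by (rule sum.cong) auto
  then show ?thesis
    by (simp add: sum.remove[of UNIV m])
qed

lemma sum_max_separable:
  fixes g :: "'k::finite \<Rightarrow> 'x \<Rightarrow> real"
  assumes "\<And>k. P (x k)"
  shows "(\<forall>y. (\<forall>k. P (y k)) \<longrightarrow> (\<Sum>k\<in>UNIV. g k (y k)) \<le> (\<Sum>k\<in>UNIV. g k (x k))) \<longleftrightarrow>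
         (\<forall>k z. P z \<longrightarrow> g k z \<le> g k (x k))"
proof
  assume opt: "\<forall>y. (\<forall>k. P (y k)) \<longrightarrow> (\<Sum>k\<in>UNIV. g k (y k)) \<le> (\<Sum>k\<in>UNIV. g k (x k))"
  show "\<forall>k z. P z \<longrightarrow> g k z \<le> g k (x k)"
  proof (intro allI impI)
    fix k z assume "P z"
    have "(\<Sum>j\<in>UNIV. g j ((x(k := z)) j)) = (\<Sum>j\<in>UNIV. ((\<lambda>j. g j (x j))(k := g k z)) j)"
      by (rule sum.cong) auto
    also have "\<dots> = (\<Sum>j\<in>UNIV. g j (x j)) - g k (x k) + g k z"
      by (rule sum_UNIV_fun_upd)
    finally show "g k z \<le> g k (x k)"
      using opt[rule_format, of "x(k := z)"] assms \<open>P z\<close> by simp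
  qed
qed (auto intro: sum_mono)

section \<open>Payoffs and best responses\<close>

definition action_value :: "('w::finite \<Rightarrow> real) \<Rightarrow> ('a \<Rightarrow> 'w \<Rightarrow> real)
    \<Rightarrow> ('w \<Rightarrow> 'm \<Rightarrow> real) \<Rightarrow> 'm \<Rightarrow> 'a \<Rightarrow> real" where
  "action_value \<mu> u \<sigma> m a = (\<Sum>w\<in>UNIV. \<mu> w * \<sigma> w m * u a w)"

definition message_value :: "('a::finite \<Rightarrow> 'w \<Rightarrow> real) \<Rightarrow> ('m \<Rightarrow> 'a \<Rightarrow> real) \<Rightarrow> 'm \<Rightarrow> 'w \<Rightarrow> real" where
  "message_value u \<rho> m w = (\<Sum>a\<in>UNIV. \<rho> m a * u a w)"

definition message_payoff :: "('w::finite \<Rightarrow> real) \<Rightarrow> ('a::finite \<Rightarrow> 'w \<Rightarrow> real)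
    \<Rightarrow> ('w \<Rightarrow> 'm \<Rightarrow> real) \<Rightarrow> ('m \<Rightarrow> 'a \<Rightarrow> real) \<Rightarrow> 'm \<Rightarrow> real" where
  "message_payoff \<mu> u \<sigma> \<rho> m = (\<Sum>a\<in>UNIV. \<rho> m a * action_value \<mu> u \<sigma> m a)"

lemma U_eq_sum_message_payoff: "U \<mu> u \<sigma> \<rho> = (\<Sum>m\<in>UNIV. message_payoff \<mu> u \<sigma> \<rho> m)"
proof -
  have "U \<mu> u \<sigma> \<rho> = (\<Sum>m\<in>UNIV. \<Sum>w\<in>UNIV. \<Sum>a\<in>UNIV. \<mu> w * \<sigma> w m * \<rho> m a * u a w)"
    unfolding U_def by (rule sum.swap)
  also have "\<dots> = (\<Sum>m\<in>UNIV. \<Sum>a\<in>UNIV. \<Sum>w\<in>UNIV. \<mu> w * \<sigma> w m * \<rho> m a * u a w)"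
    by (rule sum.cong[OF refl], rule sum.swap)
  also have "\<dots> = (\<Sum>m\<in>UNIV. message_payoff \<mu> u \<sigma> \<rho> m)"
    unfolding message_payoff_def action_value_def sum_distrib_left
    by (intro sum.cong refl) (simp add: algebra_simps)
  finally show ?thesis .
qed

lemma U_eq_sum_message_value:
  "U \<mu> u \<sigma> \<rho> = (\<Sum>w\<in>UNIV. \<mu> w * (\<Sum>m\<in>UNIV. \<sigma> w m * message_value u \<rho> m w))"
  unfolding U_def message_value_def sum_distrib_left by (intro sum.cong refl) (simp add: algebra_simps)

lemma U_act_fun_upd:
  "U \<mu> u \<sigma> (\<rho>(m := q)) =
     U \<mu> u \<sigma> \<rho> - message_payoff \<mu> u \<sigma> \<rho> m + (\<Sum>a\<in>UNIV. q a * action_value \<mu> u \<sigma> m a)"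
proof -
  have "message_payoff \<mu> u \<sigma> (\<rho>(m := q)) =
      (message_payoff \<mu> u \<sigma> \<rho>)(m := \<Sum>a\<in>UNIV. q a * action_value \<mu> u \<sigma> m a)"
    by (auto simp: message_payoff_def)
  then show ?thesis
    unfolding U_eq_sum_message_payoff by (simp only: sum_UNIV_fun_upd)
qed

lemma act_strat_fun_upd: "act_strat \<rho> \<Longrightarrow> lottery q \<Longrightarrow> act_strat (\<rho>(m := q))"
  by (simp add: act_strat_iff_lottery)

lemma R_BR_iff:
  assumes "act_strat \<rho>"
  shows "R_BR \<mu> uR \<sigma> \<rho> \<longleftrightarrow>
    (\<forall>m a c. 0 < \<rho> m a \<longrightarrow> action_value \<mu> uR \<sigma> m c \<le> action_value \<mu> uR \<sigma> m a)"
  (is "_ \<longleftrightarrow> ?rhs")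
proof -
  let ?g = "\<lambda>m q. \<Sum>a\<in>UNIV. q a * action_value \<mu> uR \<sigma> m a"
  have "R_BR \<mu> uR \<sigma> \<rho> \<longleftrightarrow>
      (\<forall>\<rho>'. (\<forall>m. lottery (\<rho>' m)) \<longrightarrow> (\<Sum>m\<in>UNIV. ?g m (\<rho>' m)) \<le> (\<Sum>m\<in>UNIV. ?g m (\<rho> m)))"
    unfolding R_BR_def act_strat_iff_lottery U_eq_sum_message_payoff message_payoff_def ..
  also have "\<dots> \<longleftrightarrow> (\<forall>m q. lottery q \<longrightarrow> ?g m q \<le> ?g m (\<rho> m))"
    using assms by (intro sum_max_separable) (simp add: act_strat_iff_lottery)
  also have "\<dots> \<longleftrightarrow> ?rhs"
    using assms by (simp add: act_strat_iff_lottery lottery_optimal_iff)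
  finally show ?thesis .
qed

lemma S_BR_iff:
  assumes "msg_strat \<sigma>" and "\<And>w. 0 < \<mu> w"
  shows "S_BR \<mu> uS \<sigma> \<rho> \<longleftrightarrow>
    (\<forall>w m k. 0 < \<sigma> w m \<longrightarrow> message_value uS \<rho> k w \<le> message_value uS \<rho> m w)"
  (is "_ \<longleftrightarrow> ?rhs")
proof -
  let ?g = "\<lambda>w q. \<mu> w * (\<Sum>m\<in>UNIV. q m * message_value uS \<rho> m w)"
  have "S_BR \<mu> uS \<sigma> \<rho> \<longleftrightarrow>
      (\<forall>\<sigma>'. (\<forall>w. lottery (\<sigma>' w)) \<longrightarrow> (\<Sum>w\<in>UNIV. ?g w (\<sigma>' w)) \<le> (\<Sum>w\<in>UNIV. ?g w (\<sigma> w)))"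
    unfolding S_BR_def msg_strat_iff_lottery U_eq_sum_message_value ..
  also have "\<dots> \<longleftrightarrow> (\<forall>w q. lottery q \<longrightarrow> ?g w q \<le> ?g w (\<sigma> w))"
    using assms(1) by (intro sum_max_separable) (simp add: msg_strat_iff_lottery)
  also have "\<dots> \<longleftrightarrow> ?rhs"
    using assms by (simp add: msg_strat_iff_lottery lottery_optimal_iff mult_le_cancel_left_pos)
  finally show ?thesis .
qed

section \<open>Persuasion-optimal profiles\<close>

definition persuasion_optimal :: "('w::finite \<Rightarrow> real) \<Rightarrow> ('a::finite \<Rightarrow> 'w \<Rightarrow> real) \<Rightarrow> ('a \<Rightarrow> 'w \<Rightarrow> real)
    \<Rightarrow> ('w \<Rightarrow> 'm::finite \<Rightarrow> real) \<Rightarrow> ('m \<Rightarrow> 'a \<Rightarrow> real) \<Rightarrow> bool" where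
  "persuasion_optimal \<mu> uS uR \<sigma> \<rho> \<longleftrightarrow> profile \<sigma> \<rho> \<and> R_BR \<mu> uR \<sigma> \<rho> \<and>
     (\<forall>(\<sigma>'::'w \<Rightarrow> 'm \<Rightarrow> real) \<rho>'. profile \<sigma>' \<rho>' \<and> R_BR \<mu> uR \<sigma>' \<rho>' \<longrightarrow> U \<mu> uS \<sigma>' \<rho>' \<le> U \<mu> uS \<sigma> \<rho>)"

lemma persuasion_optimalD:
  fixes \<sigma> :: "'w::finite \<Rightarrow> 'm::finite \<Rightarrow> real"
  assumes "persuasion_optimal \<mu> uS uR \<sigma> \<rho>"
  shows "msg_strat \<sigma>" "act_strat \<rho>" "R_BR \<mu> uR \<sigma> \<rho>"
    and "\<And>(\<sigma>'::'w \<Rightarrow> 'm \<Rightarrow> real) \<rho>'. profile \<sigma>' \<rho>' \<Longrightarrow> R_BR \<mu> uR \<sigma>' \<rho>' \<Longrightarrow> U \<mu> uS \<sigma>' \<rho>' \<le> U \<mu> uS \<sigma> \<rho>"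
  using assms by (auto simp: persuasion_optimal_def profile_def)

lemma persuasion_optimal_sender_indifferent:
  assumes PO: "persuasion_optimal \<mu> uS uR \<sigma> \<rho>" and "0 < \<rho> m a"
  shows "action_value \<mu> uS \<sigma> m a = message_payoff \<mu> uS \<sigma> \<rho> m"
proof -
  note PO' = persuasion_optimalD[OF PO]
  have R: "\<And>m a c. 0 < \<rho> m a \<Longrightarrow> action_value \<mu> uR \<sigma> m c \<le> action_value \<mu> uR \<sigma> m a"
    using PO'(3) R_BR_iff[OF PO'(2)] by blast
  have "action_value \<mu> uS \<sigma> m b \<le> message_payoff \<mu> uS \<sigma> \<rho> m" if "0 < \<rho> m b" for b
  proof -
    have A: "act_strat (\<rho>(m := dirac b))"
      using PO'(2) lottery_dirac by (rule act_strat_fun_upd)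
    have "R_BR \<mu> uR \<sigma> (\<rho>(m := dirac b))"
      unfolding R_BR_iff[OF A] using R that by (auto simp: dirac_def)
    then have "U \<mu> uS \<sigma> (\<rho>(m := dirac b)) \<le> U \<mu> uS \<sigma> \<rho>"
      using PO'(1) A by (intro PO'(4)) (simp add: profile_def)
    then show ?thesis
      by (simp add: U_act_fun_upd)
  qed
  then show ?thesis
    unfolding message_payoff_def using PO'(2) assms(2)
    by (intro lottery_mean_attained_on_support) (auto simp: act_strat_iff_lottery)
qed

lemma action_value_rescale:
  "action_value \<mu> u (\<lambda>w k. \<sigma> w k * f k) m a = f m * action_value \<mu> u \<sigma> m a"
  unfolding action_value_def sum_distrib_left by (intro sum.cong refl) (simp add: algebra_simps)

lemma U_rescale:
  "U \<mu> u (\<lambda>w k. \<sigma> w k * f k) \<rho> = (\<Sum>k\<in>UNIV. f k * message_payoff \<mu> u \<sigma> \<rho> k)"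
  unfolding U_eq_sum_message_payoff message_payoff_def action_value_rescale sum_distrib_left
  by (intro sum.cong refl) (simp add: algebra_simps)

lemma rescaled_persuasion_profile:
  assumes "profile \<sigma> \<rho>" "R_BR \<mu> uR \<sigma> \<rho>"
    and "\<And>k. 0 \<le> f k" "\<And>w. (\<Sum>k\<in>UNIV. \<sigma> w k * f k) = 1"
  shows "profile (\<lambda>w k. \<sigma> w k * f k) \<rho> \<and> R_BR \<mu> uR (\<lambda>w k. \<sigma> w k * f k) \<rho>"
proof
  have A: "act_strat \<rho>"
    using assms(1) by (simp add: profile_def)
  show "profile (\<lambda>w k. \<sigma> w k * f k) \<rho>"
    using assms(1,3,4) unfolding profile_def msg_strat_def by auto
  show "R_BR \<mu> uR (\<lambda>w k. \<sigma> w k * f k) \<rho>"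
    using assms(2,3) unfolding R_BR_iff[OF A] action_value_rescale by (auto intro: mult_left_mono)
qed

lemma sum_rescale_balanced:
  assumes "msg_strat \<sigma>" and "(\<Sum>k\<in>UNIV. \<sigma> w k * c k) = 0"
  shows "(\<Sum>k\<in>UNIV. \<sigma> w k * (1 + c k)) = 1"
  using assms by (simp add: msg_strat_def distrib_left sum.distrib)

lemma persuasion_optimal_stationary:
  fixes \<sigma> :: "'w::finite \<Rightarrow> 'm::finite \<Rightarrow> real"
  assumes PO: "persuasion_optimal \<mu> uS uR \<sigma> \<rho>" and c: "\<And>w. (\<Sum>k\<in>UNIV. \<sigma> w k * c k) = 0"
  shows "(\<Sum>k\<in>UNIV. c k * message_payoff \<mu> uS \<sigma> \<rho> k) = 0"
proof -
  note PO' = persuasion_optimalD[OF PO]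
  define S where "S = (\<Sum>k\<in>UNIV. c k * message_payoff \<mu> uS \<sigma> \<rho> k)"
  have step: "t * S \<le> 0" if t: "\<And>k. \<bar>t * c k\<bar> \<le> 1" for t
  proof -
    define f where "f k = 1 + t * c k" for k
    have "0 \<le> f k" for k
      using t[of k] by (simp add: f_def abs_le_iff)
    moreover have "(\<Sum>k\<in>UNIV. \<sigma> w k * f k) = 1" for w
    proof -
      have "(\<Sum>k\<in>UNIV. \<sigma> w k * (t * c k)) = t * (\<Sum>k\<in>UNIV. \<sigma> w k * c k)"
        by (simp add: sum_distrib_left mult.left_commute)
      then show ?thesis
        unfolding f_def using PO'(1) c[of w] by (intro sum_rescale_balanced) simp_all
    qed
    ultimately have "U \<mu> uS (\<lambda>w k. \<sigma> w k * f k) \<rho> \<le> U \<mu> uS \<sigma> \<rho>"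
      using rescaled_persuasion_profile[of \<sigma> \<rho> \<mu> uR f] PO PO'(4)
      by (simp add: persuasion_optimal_def)
    moreover have "U \<mu> uS (\<lambda>w k. \<sigma> w k * f k) \<rho> = U \<mu> uS \<sigma> \<rho> + t * S"
      unfolding U_rescale U_eq_sum_message_payoff f_def S_def
      by (simp add: distrib_right sum.distrib sum_distrib_left mult.assoc)
    ultimately show ?thesis
      by simp
  qed
  define M where "M = Max (range (\<lambda>k. \<bar>c k\<bar>)) + 1"
  have c_le: "\<bar>c k\<bar> \<le> M - 1" for k
    unfolding M_def by simp
  have M_pos: "0 < M"
    using c_le[of undefined] abs_ge_zero[of "c undefined"] by linarith
  have bound: "\<bar>s / M * c k\<bar> \<le> 1" if "\<bar>s\<bar> = 1" for s k
  proof -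
    have "\<bar>s / M * c k\<bar> = \<bar>c k\<bar> / M"
      using that M_pos by (simp add: abs_mult)
    also have "\<dots> \<le> 1"
      using c_le[of k] M_pos by simp
    finally show ?thesis .
  qed
  have "1 / M * S \<le> 0" "- 1 / M * S \<le> 0"
    by (rule step, rule bound, simp)+
  then show ?thesis
    using M_pos by (simp add: S_def[symmetric] mult_le_0_iff)
qed

lemma exists_nontrivial_vanishing_combination:
  fixes q :: "'k::finite \<Rightarrow> real^'n::finite"
  assumes "CARD('n) < CARD('k)"
  shows "\<exists>c. (\<exists>k. c k \<noteq> 0) \<and> (\<Sum>k\<in>UNIV. c k *\<^sub>R q k) = 0"
proof (cases "inj q")
  case False
  then obtain k1 k2 where k: "k1 \<noteq> k2" "q k1 = q k2"
    unfolding inj_def by auto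
  let ?c = "\<lambda>k. dirac k1 k - dirac k2 k"
  have "(\<Sum>k\<in>UNIV. ?c k *\<^sub>R q k) = q k1 - q k2"
    by (simp add: dirac_def scaleR_left_diff_distrib sum_subtractf if_distrib[of "\<lambda>t. t *\<^sub>R _"] cong: if_cong)
  moreover have "?c k1 \<noteq> 0"
    using k by (simp add: dirac_def)
  ultimately show ?thesis
    using k by (intro exI[of _ ?c]) auto
next
  case True
  then have "dependent (range q)"
    using assms by (intro dependent_biggerset) (simp add: card_image)
  then obtain u where u: "\<exists>v\<in>range q. u v \<noteq> 0" "(\<Sum>v\<in>range q. u v *\<^sub>R v) = 0"
    using real_vector.dependent_finite[of "range q"] by auto
  moreover have "(\<Sum>k\<in>UNIV. u (q k) *\<^sub>R q k) = (\<Sum>v\<in>range q. u v *\<^sub>R v)"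
    using sum.reindex[OF True, of "\<lambda>v. u v *\<^sub>R v"] by simp
  ultimately show ?thesis
    by (intro exI[of _ "\<lambda>k. u (q k)"]) auto
qed

lemma persuasion_optimal_rescale:
  fixes \<sigma> :: "'w::finite \<Rightarrow> 'm::finite \<Rightarrow> real"
  assumes PO: "persuasion_optimal \<mu> uS uR \<sigma> \<rho>"
    and c: "\<And>w. (\<Sum>k\<in>UNIV. \<sigma> w k * c k) = 0" and nonneg: "\<And>k. 0 \<le> 1 + c k"
  shows "persuasion_optimal \<mu> uS uR (\<lambda>w k. \<sigma> w k * (1 + c k)) \<rho>"
proof -
  note PO' = persuasion_optimalD[OF PO]
  have "U \<mu> uS (\<lambda>w k. \<sigma> w k * (1 + c k)) \<rho> = U \<mu> uS \<sigma> \<rho>"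
    unfolding U_rescale U_eq_sum_message_payoff
    using persuasion_optimal_stationary[OF PO c] by (simp add: distrib_right sum.distrib)
  moreover have "profile (\<lambda>w k. \<sigma> w k * (1 + c k)) \<rho> \<and> R_BR \<mu> uR (\<lambda>w k. \<sigma> w k * (1 + c k)) \<rho>"
    using PO nonneg sum_rescale_balanced[OF PO'(1) c]
    by (intro rescaled_persuasion_profile) (auto simp: persuasion_optimal_def)
  ultimately show ?thesis
    using PO unfolding persuasion_optimal_def by simp
qed

lemma balanced_rescaling_exists:
  fixes \<mu> :: "'w::finite \<Rightarrow> real" and \<sigma> :: "'w \<Rightarrow> 'm::finite \<Rightarrow> real"
  assumes \<mu>: "\<And>w. 0 < \<mu> w" and M: "msg_strat \<sigma>" and card: "CARD('w) < CARD('m)"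
    and used: "\<And>k. \<exists>w. 0 < \<sigma> w k"
  shows "\<exists>c. 0 \<le> c m \<and> (\<exists>k. c k < 0) \<and> (\<forall>w. (\<Sum>k\<in>UNIV. \<sigma> w k * c k) = 0)"
proof -
  obtain c0 where c0: "\<exists>k. c0 k \<noteq> 0" "(\<Sum>k\<in>UNIV. c0 k *\<^sub>R (\<chi> w. \<mu> w * \<sigma> w k)) = 0"
    using exists_nontrivial_vanishing_combination[OF card, of "\<lambda>k. \<chi> w. \<mu> w * \<sigma> w k"] by blast
  define c where "c = (if 0 \<le> c0 m then c0 else - c0)"
  have balanced: "(\<Sum>k\<in>UNIV. \<sigma> w k * c k) = 0" for w
  proof -
    have "(\<Sum>k\<in>UNIV. c0 k *\<^sub>R (\<chi> w. \<mu> w * \<sigma> w k)) $ w = 0"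
      using c0(2) by simp
    then have "(\<Sum>k\<in>UNIV. c0 k * (\<mu> w * \<sigma> w k)) = 0"
      by (simp add: sum_component)
    then have "\<mu> w * (\<Sum>k\<in>UNIV. \<sigma> w k * c0 k) = 0"
      by (simp add: sum_distrib_left mult.commute mult.left_commute)
    then show ?thesis
      using \<mu>[of w] by (simp add: c_def sum_negf)
  qed
  have "\<exists>k. c k < 0"
  proof (rule ccontr)
    assume "\<not> (\<exists>k. c k < 0)"
    then have nonneg: "0 \<le> c k" for k
      by (simp add: not_less)
    obtain k1 where "c k1 \<noteq> 0"
      using c0(1) by (auto simp: c_def)
    then have k1: "0 < c k1"
      using nonneg[of k1] by simp
    obtain w1 where w1: "0 < \<sigma> w1 k1"
      using used by blast
    have "0 < \<sigma> w1 k1 * c k1"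
      using k1 w1 by simp
    also have "\<dots> \<le> (\<Sum>k\<in>UNIV. \<sigma> w1 k * c k)"
      using M nonneg by (intro member_le_sum) (auto simp: msg_strat_def)
    finally show False
      using balanced by simp
  qed
  moreover have "0 \<le> c m"
    by (simp add: c_def)
  ultimately show ?thesis
    using balanced by blast
qed

(* Rescaling the message columns along a linear dependency (which exists as |M| > |Omega|)
   preserves the posteriors and, by stationarity, the payoff; push it until a column vanishes. *)
lemma persuasion_optimal_with_unused_message:
  fixes \<sigma> :: "'w::finite \<Rightarrow> 'm::finite \<Rightarrow> real"
  assumes \<mu>: "\<And>w. 0 < \<mu> w" and PO: "persuasion_optimal \<mu> uS uR \<sigma> \<rho>"
    and card: "CARD('w) < CARD('m)" and w0: "0 < \<sigma> w0 m"
  shows "\<exists>\<sigma>1 k. persuasion_optimal \<mu> uS uR \<sigma>1 \<rho> \<and> k \<noteq> m \<and> (\<forall>w. \<sigma>1 w k = 0) \<and> 0 < \<sigma>1 w0 m"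
proof (cases "\<exists>k. k \<noteq> m \<and> (\<forall>w. \<sigma> w k = 0)")
  case True
  then show ?thesis
    using PO w0 by blast
next
  case False
  note M = persuasion_optimalD(1)[OF PO]
  have "\<exists>w. 0 < \<sigma> w k" for k
    using False w0 M by (cases "k = m") (auto simp: msg_strat_iff_lottery lottery_pos_iff)
  then obtain c where c: "0 \<le> c m" "\<exists>k. c k < 0" "\<And>w. (\<Sum>k\<in>UNIV. \<sigma> w k * c k) = 0"
    using balanced_rescaling_exists[OF \<mu> M card] by blast
  define t where "t = Max (range (\<lambda>k. - c k))"
  have le_t: "- c k \<le> t" for k
    unfolding t_def by simp
  have "t \<in> range (\<lambda>k. - c k)"
    unfolding t_def by (rule Max_in) auto
  then obtain k where k: "c k = - t"
    by auto
  have t_pos: "0 < t"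
    using c(2) le_t by (meson neg_0_less_iff_less order.strict_trans2)
  have "persuasion_optimal \<mu> uS uR (\<lambda>w k. \<sigma> w k * (1 + c k / t)) \<rho>"
  proof (rule persuasion_optimal_rescale[OF PO])
    show "(\<Sum>k\<in>UNIV. \<sigma> w k * (c k / t)) = 0" for w
      using c(3)[of w] by (simp add: sum_divide_distrib[symmetric])
    show "0 \<le> 1 + c k / t" for k
      using le_t[of k] t_pos by (simp add: field_simps)
  qed
  moreover have "k \<noteq> m"
    using c(1) k t_pos by auto
  moreover have "0 < \<sigma> w0 m * (1 + c m / t)"
    using w0 c(1) t_pos by (simp add: add_pos_nonneg)
  ultimately show ?thesis
    using k t_pos by (intro exI[of _ "\<lambda>w k. \<sigma> w k * (1 + c k / t)"] exI[of _ k]) auto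
qed

section \<open>Splitting a message\<close>

lemma eventually_small_multiple:
  fixes X Y :: "'i \<Rightarrow> real"
  assumes "finite I" and "\<And>i. i \<in> I \<Longrightarrow> 0 < Y i"
  shows "\<forall>\<^sub>F \<epsilon> in at_right 0. \<forall>i\<in>I. \<epsilon> * X i \<le> Y i"
proof (intro eventually_ball_finite[OF assms(1)] ballI)
  fix i assume "i \<in> I"
  have "((\<lambda>\<epsilon>. \<epsilon> * X i) \<longlongrightarrow> 0) (at_right 0)"
    by (intro tendsto_mult_left_zero tendsto_ident_at)
  then show "\<forall>\<^sub>F \<epsilon> in at_right 0. \<epsilon> * X i \<le> Y i"
    using order_tendstoD(2) assms(2)[OF \<open>i \<in> I\<close>] by (fastforce elim: eventually_mono)
qed

definition split_message :: "('w \<Rightarrow> 'm \<Rightarrow> real) \<Rightarrow> 'm \<Rightarrow> 'm \<Rightarrow> ('w \<Rightarrow> real) \<Rightarrow> 'w \<Rightarrow> 'm \<Rightarrow> real" where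
  "split_message \<sigma> m m' e w = (\<sigma> w)(m := \<sigma> w m / 2 + e w, m' := \<sigma> w m / 2 - e w)"

lemma msg_strat_split_message:
  assumes "msg_strat \<sigma>" and "m' \<noteq> m" "\<And>w. \<sigma> w m' = 0" and "\<And>w. \<bar>e w\<bar> \<le> \<sigma> w m / 2"
  shows "msg_strat (split_message \<sigma> m m' e)"
  unfolding msg_strat_def
proof (intro conjI allI)
  fix w k
  show "0 \<le> split_message \<sigma> m m' e w k"
    using assms(1) assms(4)[of w] by (auto simp: split_message_def msg_strat_def abs_le_iff)
next
  fix w
  show "(\<Sum>k\<in>UNIV. split_message \<sigma> m m' e w k) = 1"
    using assms(1-3) unfolding split_message_def by (simp only: sum_UNIV_fun_upd) (simp add: msg_strat_def)
qed

lemma action_value_split_message: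
  assumes "m' \<noteq> m"
  shows "action_value \<mu> u (split_message \<sigma> m m' e) k c =
    (if k = m then action_value \<mu> u \<sigma> m c / 2 + (\<Sum>w\<in>UNIV. \<mu> w * e w * u c w)
     else if k = m' then action_value \<mu> u \<sigma> m c / 2 - (\<Sum>w\<in>UNIV. \<mu> w * e w * u c w)
     else action_value \<mu> u \<sigma> k c)"
  using assms
  by (auto simp: action_value_def split_message_def algebra_simps sum.distrib sum_subtractf
      sum_divide_distrib)

lemma R_BR_split_message:
  assumes A: "act_strat \<rho>" and R: "R_BR \<mu> uR \<sigma> \<rho>" and "m' \<noteq> m"
    and a: "0 < \<rho> m a" and b: "0 < \<rho> m b"
    and shift: "\<And>c. 2 * \<bar>(\<Sum>w\<in>UNIV. \<mu> w * e w * uR c w) - (\<Sum>w\<in>UNIV. \<mu> w * e w * uR a w)\<bar>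
                   \<le> action_value \<mu> uR \<sigma> m a - action_value \<mu> uR \<sigma> m c"
  shows "R_BR \<mu> uR (split_message \<sigma> m m' e) (\<rho>(m := dirac a, m' := dirac b))"
proof -
  let ?V = "action_value \<mu> uR \<sigma>" and ?S = "\<lambda>c. \<Sum>w\<in>UNIV. \<mu> w * e w * uR c w"
  have best: "0 < \<rho> k x \<Longrightarrow> ?V k c \<le> ?V k x" for k x c
    using R unfolding R_BR_iff[OF A] by blast
  have Vb: "?V m b = ?V m a"
    using best[OF a, of b] best[OF b, of a] by simp
  have Sb: "?S b = ?S a"
    using shift[of b] Vb by simp
  have A': "act_strat (\<rho>(m := dirac a, m' := dirac b))"
    using A by (intro act_strat_fun_upd lottery_dirac)
  show ?thesis
    unfolding R_BR_iff[OF A'] action_value_split_message[OF \<open>m' \<noteq> m\<close>]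
  proof (intro allI impI)
    fix k x c assume x: "0 < (\<rho>(m := dirac a, m' := dirac b)) k x"
    consider "k = m" "x = a" | "k = m'" "x = b" | "k \<noteq> m" "k \<noteq> m'" "0 < \<rho> k x"
      using x \<open>m' \<noteq> m\<close> by (cases "k = m'"; cases "k = m") (auto simp: dirac_def split: if_splits)
    then show "(if k = m then ?V m c / 2 + ?S c else if k = m' then ?V m c / 2 - ?S c else ?V k c)
             \<le> (if k = m then ?V m x / 2 + ?S x else if k = m' then ?V m x / 2 - ?S x else ?V k x)"
    proof cases
      case 1
      then show ?thesis
        using shift[of c] abs_ge_self[of "?S c - ?S a"] by simp
    next
      case 2
      then show ?thesis
        using shift[of c] abs_ge_minus_self[of "?S c - ?S a"] Vb Sb \<open>m' \<noteq> m\<close> by simp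
    next
      case 3
      then show ?thesis
        using best by simp
    qed
  qed
qed

lemma U_split_message:
  assumes "m' \<noteq> m"
  shows "U \<mu> u (split_message \<sigma> m m' e) (\<rho>(m := dirac a, m' := dirac b)) =
    U \<mu> u \<sigma> \<rho> - message_payoff \<mu> u \<sigma> \<rho> m - message_payoff \<mu> u \<sigma> \<rho> m'
    + (action_value \<mu> u \<sigma> m a / 2 + (\<Sum>w\<in>UNIV. \<mu> w * e w * u a w))
    + (action_value \<mu> u \<sigma> m b / 2 - (\<Sum>w\<in>UNIV. \<mu> w * e w * u b w))"
proof -
  have "message_payoff \<mu> u (split_message \<sigma> m m' e) (\<rho>(m := dirac a, m' := dirac b)) =
    (message_payoff \<mu> u \<sigma> \<rho>)
      (m := action_value \<mu> u \<sigma> m a / 2 + (\<Sum>w\<in>UNIV. \<mu> w * e w * u a w),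
       m' := action_value \<mu> u \<sigma> m b / 2 - (\<Sum>w\<in>UNIV. \<mu> w * e w * u b w))"
    using assms by (auto simp: fun_eq_iff message_payoff_def action_value_split_message)
  then show ?thesis
    using assms unfolding U_eq_sum_message_payoff by (simp only: sum_UNIV_fun_upd) simp
qed

(* After the split Receiver plays a at m and b at m'; since Sender is indifferent between a and b
   at m, her payoff changes exactly by the difference of the two shift terms. *)
lemma persuasion_optimal_split_message_le:
  fixes \<sigma> :: "'w::finite \<Rightarrow> 'm::finite \<Rightarrow> real"
  assumes PO: "persuasion_optimal \<mu> uS uR \<sigma> \<rho>"
    and m': "m' \<noteq> m" "\<And>w. \<sigma> w m' = 0" and a: "0 < \<rho> m a" and b: "0 < \<rho> m b"
    and e_le: "\<And>w. \<bar>e w\<bar> \<le> \<sigma> w m / 2"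
    and shift: "\<And>c. 2 * \<bar>(\<Sum>w\<in>UNIV. \<mu> w * e w * uR c w) - (\<Sum>w\<in>UNIV. \<mu> w * e w * uR a w)\<bar>
                   \<le> action_value \<mu> uR \<sigma> m a - action_value \<mu> uR \<sigma> m c"
  shows "(\<Sum>w\<in>UNIV. \<mu> w * e w * uS a w) \<le> (\<Sum>w\<in>UNIV. \<mu> w * e w * uS b w)"
proof -
  note PO' = persuasion_optimalD[OF PO]
  let ?\<sigma>' = "split_message \<sigma> m m' e" and ?\<rho>' = "\<rho>(m := dirac a, m' := dirac b)"
  have "msg_strat ?\<sigma>'"
    using PO'(1) m' e_le by (rule msg_strat_split_message)
  moreover have "act_strat ?\<rho>'"
    using PO'(2) by (intro act_strat_fun_upd lottery_dirac)
  moreover have "R_BR \<mu> uR ?\<sigma>' ?\<rho>'"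
    using PO'(2,3) m'(1) a b shift by (rule R_BR_split_message)
  ultimately have "U \<mu> uS ?\<sigma>' ?\<rho>' \<le> U \<mu> uS \<sigma> \<rho>"
    by (intro PO'(4)) (simp_all add: profile_def)
  moreover have "message_payoff \<mu> uS \<sigma> \<rho> m' = 0"
    using m'(2) by (simp add: message_payoff_def action_value_def)
  ultimately show ?thesis
    unfolding U_split_message[OF m'(1)]
    using persuasion_optimal_sender_indifferent[OF PO a] persuasion_optimal_sender_indifferent[OF PO b]
    by simp
qed

lemma persuasion_optimal_no_profitable_split:
  fixes \<sigma> :: "'w::finite \<Rightarrow> 'm::finite \<Rightarrow> real" and d :: "'w \<Rightarrow> real"
  assumes \<mu>: "\<And>w. 0 < \<mu> w" and PO: "persuasion_optimal \<mu> uS uR \<sigma> \<rho>"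
    and m': "m' \<noteq> m" "\<And>w. \<sigma> w m' = 0" and a: "0 < \<rho> m a" and b: "0 < \<rho> m b"
    and d_supp: "\<And>w. \<sigma> w m = 0 \<Longrightarrow> d w = 0"
    and d_indiff: "\<And>c. action_value \<mu> uR \<sigma> m c = action_value \<mu> uR \<sigma> m a \<Longrightarrow>
                     (\<Sum>w\<in>UNIV. d w * uR c w) = (\<Sum>w\<in>UNIV. d w * uR a w)"
  shows "(\<Sum>w\<in>UNIV. d w * uS a w) \<le> (\<Sum>w\<in>UNIV. d w * uS b w)"
proof -
  note PO' = persuasion_optimalD[OF PO]
  let ?V = "action_value \<mu> uR \<sigma> m" and ?D = "\<lambda>u c. \<Sum>w\<in>UNIV. d w * u c w"
  have best: "?V c \<le> ?V a" for c
    using PO'(3) a unfolding R_BR_iff[OF PO'(2)] by blast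
  have "\<forall>\<^sub>F \<epsilon> in at_right 0. 0 < \<epsilon> \<and>
      (\<forall>w\<in>{w. \<sigma> w m \<noteq> 0}. \<epsilon> * \<bar>d w / \<mu> w\<bar> \<le> \<sigma> w m / 2) \<and>
      (\<forall>c\<in>{c. ?V c \<noteq> ?V a}. \<epsilon> * (2 * \<bar>?D uR c - ?D uR a\<bar>) \<le> ?V a - ?V c)"
    using PO'(1) best
    by (intro eventually_conj eventually_at_right_less eventually_small_multiple)
       (auto simp: msg_strat_def less_le)
  then obtain \<epsilon> where \<epsilon>: "0 < \<epsilon>" "\<And>w. \<sigma> w m \<noteq> 0 \<Longrightarrow> \<epsilon> * \<bar>d w / \<mu> w\<bar> \<le> \<sigma> w m / 2"
      "\<And>c. ?V c \<noteq> ?V a \<Longrightarrow> \<epsilon> * (2 * \<bar>?D uR c - ?D uR a\<bar>) \<le> ?V a - ?V c"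
    using eventually_happens'[OF trivial_limit_at_right_real] by blast
  define e where "e w = \<epsilon> * d w / \<mu> w" for w
  have shift: "(\<Sum>w\<in>UNIV. \<mu> w * e w * u c w) = \<epsilon> * ?D u c" for u c
    unfolding e_def sum_distrib_left using \<mu>
    by (intro sum.cong refl) (simp add: field_simps less_imp_neq[symmetric])
  have "(\<Sum>w\<in>UNIV. \<mu> w * e w * uS a w) \<le> (\<Sum>w\<in>UNIV. \<mu> w * e w * uS b w)"
  proof (rule persuasion_optimal_split_message_le[OF PO m' a b])
    show "\<bar>e w\<bar> \<le> \<sigma> w m / 2" for w
      using \<epsilon>(1) \<epsilon>(2)[of w] d_supp[of w] by (cases "\<sigma> w m = 0") (auto simp: e_def abs_mult)
    show "2 * \<bar>(\<Sum>w\<in>UNIV. \<mu> w * e w * uR c w) - (\<Sum>w\<in>UNIV. \<mu> w * e w * uR a w)\<bar> \<le> ?V a - ?V c" for c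
      using \<epsilon>(1) \<epsilon>(3)[of c] d_indiff[of c] best[of c]
      by (cases "?V c = ?V a") (simp_all add: shift abs_mult flip: right_diff_distrib)
  qed
  then show ?thesis
    using \<epsilon>(1) by (simp add: shift)
qed

section \<open>Generic environments\<close>

definition payoff_gain :: "('a \<Rightarrow> 'w::finite \<Rightarrow> real) \<Rightarrow> 'w set \<Rightarrow> 'a \<Rightarrow> 'a \<Rightarrow> real^'w" where
  "payoff_gain u T a c = (\<chi> w. if w \<in> T then u c w - u a w else 0)"

(* Each violation confines
   the environment to a lower-dimensional set. *)
definition generic :: "('a::finite \<Rightarrow> 'w::finite \<Rightarrow> real) \<Rightarrow> ('a \<Rightarrow> 'w \<Rightarrow> real) \<Rightarrow> bool" where
  "generic uS uR \<longleftrightarrow>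
    (\<forall>T a b C. a \<noteq> b \<longrightarrow> card C < card T \<longrightarrow>
       payoff_gain uS T b a \<notin> span (payoff_gain uR T a ` C)) \<and>
    (\<forall>T a c C. c \<noteq> a \<longrightarrow> c \<notin> C \<longrightarrow> card C < card T \<longrightarrow>
       payoff_gain uR T a c \<notin> span (payoff_gain uR T a ` C))"

lemma generic_sender_gain_not_in_span:
  "generic uS uR \<Longrightarrow> a \<noteq> b \<Longrightarrow> card C < card T \<Longrightarrow>
     payoff_gain uS T b a \<notin> span (payoff_gain uR T a ` C)"
  by (simp add: generic_def)

lemma generic_receiver_gain_not_in_span:
  "generic uS uR \<Longrightarrow> c \<noteq> a \<Longrightarrow> c \<notin> C \<Longrightarrow> card C < card T \<Longrightarrow>
     payoff_gain uR T a c \<notin> span (payoff_gain uR T a ` C)"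
  by (simp add: generic_def)

lemma generic_sender_strict:
  assumes "generic uS uR" and "a \<noteq> b"
  shows "uS a w \<noteq> uS b w"
proof -
  have "payoff_gain uS {w} b a \<notin> span (payoff_gain uR {w} a ` {})"
    using assms by (intro generic_sender_gain_not_in_span) simp_all
  then have "payoff_gain uS {w} b a \<noteq> 0"
    by (simp add: span_empty)
  then show ?thesis
    by (auto simp: payoff_gain_def vec_eq_iff split: if_splits)
qed

lemma payoff_gain_nth: "w \<in> T \<Longrightarrow> payoff_gain u T a c $ w = u c w - u a w"
  by (simp add: payoff_gain_def)

lemma payoff_gain_self: "payoff_gain u T a a = 0"
  by (simp add: payoff_gain_def vec_eq_iff)

lemma payoff_gain_inner_supported:
  assumes "\<And>w. w \<notin> T \<Longrightarrow> z $ w = 0"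
  shows "payoff_gain u T a c \<bullet> z = (\<Sum>w\<in>UNIV. z $ w * u c w) - (\<Sum>w\<in>UNIV. z $ w * u a w)"
proof -
  have "payoff_gain u T a c \<bullet> z = (\<Sum>w\<in>UNIV. z $ w * u c w - z $ w * u a w)"
    unfolding inner_vec_def payoff_gain_def using assms
    by (intro sum.cong refl) (auto simp: algebra_simps)
  then show ?thesis
    by (simp add: sum_subtractf)
qed

lemma subspace_supported: "subspace {x :: real^'w::finite. \<forall>w. w \<notin> T \<longrightarrow> x $ w = 0}"
  by (simp add: subspace_def)

lemma in_span_axis_supported:
  fixes v :: "real^'w::finite"
  assumes "\<And>w. w \<notin> T \<Longrightarrow> v $ w = 0"
  shows "v \<in> span ((\<lambda>w. axis w 1) ` T)"
proof -
  have "v = (\<Sum>w\<in>T. v $ w *\<^sub>R axis w 1)"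
  proof (rule vec_eq_iff[THEN iffD2], rule allI)
    fix i
    have "(\<Sum>w\<in>T. v $ w *\<^sub>R axis w (1::real)) $ i = (\<Sum>w\<in>T. if w = i then v $ i else 0)"
      unfolding sum_component by (intro sum.cong refl) (auto simp: axis_def)
    also have "\<dots> = v $ i"
      using assms[of i] by (simp add: sum.delta')
    finally show "v $ i = (\<Sum>w\<in>T. v $ w *\<^sub>R axis w 1) $ i"
      by simp
  qed
  also have "\<dots> \<in> span ((\<lambda>w. axis w 1) ` T)"
    by (intro span_sum span_scale span_base) auto
  finally show ?thesis .
qed

lemma card_independent_supported:
  fixes S :: "(real^'w::finite) set"
  assumes "independent S" and "\<And>v w. v \<in> S \<Longrightarrow> w \<notin> T \<Longrightarrow> v $ w = 0"
  shows "card S \<le> card T"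
proof -
  have "S \<subseteq> span ((\<lambda>w. axis w (1::real)) ` T)"
  proof
    fix v assume "v \<in> S"
    then show "v \<in> span ((\<lambda>w. axis w 1) ` T)"
      using assms(2) by (intro in_span_axis_supported)
  qed
  then have "card S \<le> card ((\<lambda>w. axis w (1::real)) ` T)"
    using independent_span_bound[OF _ assms(1)] by simp
  also have "\<dots> \<le> card T"
    by (rule card_image_le) simp
  finally show ?thesis .
qed

lemma independent_image_if_not_in_span:
  fixes f :: "'c \<Rightarrow> 'v::real_vector"
  assumes "finite D" and "\<And>x F. x \<in> D \<Longrightarrow> F \<subseteq> D \<Longrightarrow> x \<notin> F \<Longrightarrow> f x \<notin> span (f ` F)"
  shows "independent (f ` D) \<and> card (f ` D) = card D"
  using assms
proof (induction D rule: finite_induct)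
  case (insert x F)
  have "f x \<notin> span (f ` F)"
    using insert.prems insert.hyps(2) by blast
  moreover have "independent (f ` F) \<and> card (f ` F) = card F"
    using insert by blast
  ultimately show ?case
    using insert.hyps span_base[of "f x" "f ` F"]
    by (auto simp: independent_insertI card_insert_if)
qed (simp add: independent_empty)

(* q is a nonzero vector on T orthogonal to all these gains, and in general position any |T| of
   the gains already span the |T|-dimensional space of vectors on T. *)
lemma generic_card_indifferent_lt:
  fixes q :: "real^'w::finite"
  assumes g: "generic uS uR" and q: "q \<noteq> 0" "\<And>w. w \<notin> T \<Longrightarrow> q $ w = 0"
    and orth: "\<And>c. c \<in> B \<Longrightarrow> q \<bullet> payoff_gain uR T a c = 0"
  shows "card (B - {a}) < card T"
proof (rule ccontr)
  let ?g = "payoff_gain uR T a"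
  assume "\<not> card (B - {a}) < card T"
  then obtain D where D: "D \<subseteq> B - {a}" "card D = card T" "finite D"
    by (meson not_less obtain_subset_with_card_n)
  have indep: "independent (?g ` D) \<and> card (?g ` D) = card D"
  proof (rule independent_image_if_not_in_span[OF D(3)])
    fix x F assume x: "x \<in> D" "F \<subseteq> D" "x \<notin> F"
    then have "F \<subset> D"
      by blast
    then have "card F < card T"
      using psubset_card_mono[OF D(3)] D(2) by simp
    moreover have "x \<noteq> a"
      using x(1) D(1) by blast
    ultimately show "?g x \<notin> span (?g ` F)"
      using g x(3) by (intro generic_receiver_gain_not_in_span)
  qed
  have q_span: "q \<notin> span (?g ` D)"
  proof
    assume "q \<in> span (?g ` D)"
    then have "orthogonal q q"
      by (rule orthogonal_to_span) (use orth D(1) in \<open>auto simp: orthogonal_def\<close>)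
    with q(1) show False
      by (simp add: orthogonal_def)
  qed
  have "independent (insert q (?g ` D))"
    using q_span indep by (simp add: independent_insertI)
  then have "card (insert q (?g ` D)) \<le> card T"
  proof (rule card_independent_supported)
    fix v w assume "v \<in> insert q (?g ` D)" "w \<notin> T"
    then show "v $ w = 0"
      by (elim insertE imageE) (simp_all add: q(2) payoff_gain_def)
  qed
  moreover have "q \<notin> ?g ` D"
    using q_span span_base[of q "?g ` D"] by blast
  then have "card (insert q (?g ` D)) = Suc (card T)"
    using card_insert_disjoint[OF finite_imageI[OF D(3)]] indep D(2) by simp
  ultimately show False
    by simp
qed

lemma exists_direction_orthogonal_to_span:
  fixes \<psi> :: "'v::euclidean_space"
  assumes "\<psi> \<notin> span V"
  shows "\<exists>z\<in>span (insert \<psi> V). (\<forall>v\<in>V. v \<bullet> z = 0) \<and> 0 < \<psi> \<bullet> z"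
proof -
  obtain y z where yz: "y \<in> span V" "\<And>v. v \<in> span V \<Longrightarrow> orthogonal z v" "\<psi> = y + z"
    using orthogonal_subspace_decomp_exists by blast
  have "z \<noteq> 0"
    using yz(1,3) assms by auto
  moreover have "\<psi> \<bullet> z = z \<bullet> z"
    using yz(2)[OF yz(1)] inner_commute[of y z] by (simp add: yz(3) inner_add_left orthogonal_def)
  moreover have "z \<in> span (insert \<psi> V)"
    using yz(1,3) span_mono[of V "insert \<psi> V"]
    by (metis add_diff_cancel_left' span_base insertI1 span_diff subset_insertI subsetD)
  moreover have "v \<bullet> z = 0" if "v \<in> V" for v
    using yz(2)[of v] that span_base[of v V] inner_commute[of z v] by (simp add: orthogonal_def)
  ultimately show ?thesis
    by (metis inner_gt_zero_iff)
qed

lemma generic_separating_direction: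
  fixes q :: "real^'w::finite"
  assumes g: "generic uS uR" and "a \<noteq> b" and q: "q \<noteq> 0" "\<And>w. w \<notin> T \<Longrightarrow> q $ w = 0"
    and orth: "\<And>c. c \<in> B \<Longrightarrow> q \<bullet> payoff_gain uR T a c = 0"
  obtains z where "\<And>w. w \<notin> T \<Longrightarrow> z $ w = 0"
    and "\<And>c. c \<in> B \<Longrightarrow> payoff_gain uR T a c \<bullet> z = 0"
    and "0 < payoff_gain uS T b a \<bullet> z"
proof -
  let ?\<psi> = "payoff_gain uS T b a" and ?V = "payoff_gain uR T a ` (B - {a})"
  have "card (B - {a}) < card T"
    using g q orth by (rule generic_card_indifferent_lt)
  then have "?\<psi> \<notin> span ?V"
    using g \<open>a \<noteq> b\<close> by (intro generic_sender_gain_not_in_span)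
  then obtain z where z: "z \<in> span (insert ?\<psi> ?V)" "\<And>v. v \<in> ?V \<Longrightarrow> v \<bullet> z = 0" "0 < ?\<psi> \<bullet> z"
    using exists_direction_orthogonal_to_span by blast
  have "span (insert ?\<psi> ?V) \<subseteq> {x. \<forall>w. w \<notin> T \<longrightarrow> x $ w = 0}"
    by (intro span_minimal subspace_supported) (auto simp: payoff_gain_def)
  then have "z $ w = 0" if "w \<notin> T" for w
    using z(1) that by blast
  moreover have "payoff_gain uR T a c \<bullet> z = 0" if "c \<in> B" for c
  proof (cases "c = a")
    case False
    with that show ?thesis
      by (intro z(2) imageI) simp
  qed (simp add: payoff_gain_self)
  ultimately show ?thesis
    using that z(3) by blast
qed

lemma generic_persuasion_optimal_no_mixing:
  fixes \<sigma> :: "'w::finite \<Rightarrow> 'm::finite \<Rightarrow> real"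
  assumes \<mu>: "\<And>w. 0 < \<mu> w" and g: "generic uS uR" and PO: "persuasion_optimal \<mu> uS uR \<sigma> \<rho>"
    and m': "m' \<noteq> m" "\<And>w. \<sigma> w m' = 0" and w0: "0 < \<sigma> w0 m"
    and a: "0 < \<rho> m a" and b: "0 < \<rho> m b" and "a \<noteq> b"
  shows False
proof -
  note M = persuasion_optimalD(1)[OF PO]
  define T where "T = {w. 0 < \<sigma> w m}"
  define B where "B = {c. action_value \<mu> uR \<sigma> m c = action_value \<mu> uR \<sigma> m a}"
  define q where "q = (\<chi> w. \<mu> w * \<sigma> w m)"
  have off_T: "\<sigma> w m = 0 \<longleftrightarrow> w \<notin> T" for w
    using M by (auto simp: T_def msg_strat_iff_lottery lottery_pos_iff)
  have q_supp: "q $ w = 0" if "w \<notin> T" for w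
    using off_T[of w] that by (simp add: q_def)
  have "q \<noteq> 0"
    using \<mu>[of w0] w0 by (auto simp: q_def vec_eq_iff intro!: exI[of _ w0])
  moreover have "q \<bullet> payoff_gain uR T a c = 0" if "c \<in> B" for c
  proof -
    have "payoff_gain uR T a c \<bullet> q = (\<Sum>w\<in>UNIV. q $ w * uR c w) - (\<Sum>w\<in>UNIV. q $ w * uR a w)"
      using q_supp by (rule payoff_gain_inner_supported)
    then show ?thesis
      using that by (simp add: B_def q_def action_value_def mult.assoc inner_commute)
  qed
  ultimately obtain z where z_supp: "\<And>w. w \<notin> T \<Longrightarrow> z $ w = 0"
    and z_orth: "\<And>c. c \<in> B \<Longrightarrow> payoff_gain uR T a c \<bullet> z = 0"
    and z_gain: "0 < payoff_gain uS T b a \<bullet> z"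
    using generic_separating_direction[OF g \<open>a \<noteq> b\<close>] q_supp by blast
  have z_inner: "payoff_gain u T x y \<bullet> z = (\<Sum>w\<in>UNIV. z $ w * u y w) - (\<Sum>w\<in>UNIV. z $ w * u x w)"
    for u x y
    using z_supp by (rule payoff_gain_inner_supported)
  have "(\<Sum>w\<in>UNIV. z $ w * uS a w) \<le> (\<Sum>w\<in>UNIV. z $ w * uS b w)"
  proof (rule persuasion_optimal_no_profitable_split[OF \<mu> PO m' a b])
    show "z $ w = 0" if "\<sigma> w m = 0" for w
      using that off_T z_supp by blast
    show "(\<Sum>w\<in>UNIV. z $ w * uR c w) = (\<Sum>w\<in>UNIV. z $ w * uR a w)"
      if "action_value \<mu> uR \<sigma> m c = action_value \<mu> uR \<sigma> m a" for c
      using z_orth[of c] that unfolding z_inner by (simp add: B_def)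
  qed
  then show False
    using z_gain unfolding z_inner by simp
qed

lemma generic_persuasion_optimal_pure:
  fixes \<sigma> :: "'w::finite \<Rightarrow> 'm::finite \<Rightarrow> real"
  assumes \<mu>: "\<And>w. 0 < \<mu> w" and g: "generic uS uR" and PO: "persuasion_optimal \<mu> uS uR \<sigma> \<rho>"
    and card: "CARD('w) < CARD('m)" and w0: "0 < \<sigma> w0 m"
  shows "\<exists>a. \<rho> m = dirac a"
proof -
  obtain \<sigma>1 m' where PO1: "persuasion_optimal \<mu> uS uR \<sigma>1 \<rho>"
    and m': "m' \<noteq> m" "\<And>w. \<sigma>1 w m' = 0" and w0': "0 < \<sigma>1 w0 m"
    using persuasion_optimal_with_unused_message[OF \<mu> PO card w0] by blast
  have L: "lottery (\<rho> m)"
    using persuasion_optimalD(2)[OF PO] by (simp add: act_strat_iff_lottery)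
  then obtain a where a: "0 < \<rho> m a"
    using lottery_ex_pos by blast
  have "\<rho> m b = 0" if "b \<noteq> a" for b
  proof (rule ccontr)
    assume "\<rho> m b \<noteq> 0"
    then show False
      using generic_persuasion_optimal_no_mixing[OF \<mu> g PO1 m' w0' a _ that[symmetric]]
        lottery_pos_iff[OF L] by blast
  qed
  then show ?thesis
    using lottery_eq_dirac[OF L] by blast
qed

section \<open>Partitional equilibria\<close>

lemma equilibrium_induced_action:
  fixes \<sigma> :: "'w::finite \<Rightarrow> 'm::finite \<Rightarrow> real" and \<rho> :: "'m \<Rightarrow> 'a::finite \<Rightarrow> real"
  assumes \<mu>: "\<And>w. 0 < \<mu> w" and M: "msg_strat \<sigma>" and S: "S_BR \<mu> uS \<sigma> \<rho>"
    and pure: "\<And>w m. 0 < \<sigma> w m \<Longrightarrow> \<exists>a. \<rho> m = dirac a"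
    and strict: "\<And>w a b. a \<noteq> b \<Longrightarrow> uS a w \<noteq> uS b w"
  obtains \<alpha> where "\<And>w m. 0 < \<sigma> w m \<Longrightarrow> \<rho> m = dirac (\<alpha> w)"
    and "\<And>w w'. uS (\<alpha> w') w \<le> uS (\<alpha> w) w"
proof
  define mw where "mw w = (SOME m. 0 < \<sigma> w m)" for w
  define \<alpha> where "\<alpha> w = (SOME a. \<rho> (mw w) = dirac a)" for w
  have mw: "0 < \<sigma> w (mw w)" for w
    unfolding mw_def using M lottery_ex_pos by (metis msg_strat_iff_lottery someI_ex)
  have \<alpha>: "\<rho> (mw w) = dirac (\<alpha> w)" for w
    unfolding \<alpha>_def using pure[OF mw] by (rule someI_ex)
  have value_pure: "message_value uS \<rho> m w' = uS a w'" if "\<rho> m = dirac a" for m a w'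
    using that by (simp add: message_value_def)
  have best: "message_value uS \<rho> k w \<le> message_value uS \<rho> m w" if "0 < \<sigma> w m" for w m k
    using S that unfolding S_BR_iff[OF M \<mu>] by blast
  show "\<rho> m = dirac (\<alpha> w)" if pos: "0 < \<sigma> w m" for w m
  proof -
    obtain a where a: "\<rho> m = dirac a"
      using pure[OF pos] by blast
    have "message_value uS \<rho> (mw w) w \<le> message_value uS \<rho> m w"
      "message_value uS \<rho> m w \<le> message_value uS \<rho> (mw w) w"
      by (rule best[OF pos], rule best[OF mw])
    then have "uS a w = uS (\<alpha> w) w"
      unfolding value_pure[OF a] value_pure[OF \<alpha>] by simp
    then show ?thesis
      using a strict by metis
  qed
  show "uS (\<alpha> w') w \<le> uS (\<alpha> w) w" for w w'
    using best[OF mw[of w], of "mw w'"] value_pure[OF \<alpha>] by simp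
qed

lemma action_value_pooled:
  assumes "\<And>w. \<sigma>' w k = (\<Sum>m\<in>UNIV. \<sigma> w m * \<rho> m a)"
  shows "action_value \<mu> u \<sigma>' k c = (\<Sum>m\<in>UNIV. \<rho> m a * action_value \<mu> u \<sigma> m c)"
  unfolding action_value_def assms sum_distrib_left sum_distrib_right
  by (subst sum.swap) (simp add: algebra_simps)

lemma R_BR_pooled:
  assumes A: "act_strat \<rho>" and R: "R_BR \<mu> uR \<sigma> \<rho>" and A': "act_strat \<rho>'"
    and pooled: "\<And>k x. 0 < \<rho>' k x \<Longrightarrow>
                   (\<forall>w. \<sigma>' w k = 0) \<or> (\<forall>w. \<sigma>' w k = (\<Sum>m\<in>UNIV. \<sigma> w m * \<rho> m x))"
  shows "R_BR \<mu> uR \<sigma>' \<rho>'"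
  unfolding R_BR_iff[OF A']
proof (intro allI impI)
  fix k x c assume "0 < \<rho>' k x"
  then consider "\<And>w. \<sigma>' w k = 0" | "\<And>w. \<sigma>' w k = (\<Sum>m\<in>UNIV. \<sigma> w m * \<rho> m x)"
    using pooled by blast
  then show "action_value \<mu> uR \<sigma>' k c \<le> action_value \<mu> uR \<sigma>' k x"
  proof cases
    case 1
    then show ?thesis
      by (simp add: action_value_def)
  next
    case 2
    have "(\<Sum>m\<in>UNIV. \<rho> m x * action_value \<mu> uR \<sigma> m c) \<le> (\<Sum>m\<in>UNIV. \<rho> m x * action_value \<mu> uR \<sigma> m x)"
    proof (rule sum_mono)
      fix m
      have "0 \<le> \<rho> m x"
        using A by (simp add: act_strat_def)
      moreover have "action_value \<mu> uR \<sigma> m c \<le> action_value \<mu> uR \<sigma> m x" if "0 < \<rho> m x"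
        using R that unfolding R_BR_iff[OF A] by blast
      ultimately show "\<rho> m x * action_value \<mu> uR \<sigma> m c \<le> \<rho> m x * action_value \<mu> uR \<sigma> m x"
        by (cases "\<rho> m x = 0") (simp_all add: mult_left_mono)
    qed
    moreover have "action_value \<mu> uR \<sigma>' k c' = (\<Sum>m\<in>UNIV. \<rho> m x * action_value \<mu> uR \<sigma> m c')" for c'
      using 2 by (rule action_value_pooled)
    ultimately show ?thesis
      by simp
  qed
qed

lemma U_eq_induced_actions:
  assumes "msg_strat \<sigma>" and "\<And>w m. \<sigma> w m \<noteq> 0 \<Longrightarrow> \<rho> m = dirac (\<alpha> w)"
  shows "U \<mu> u \<sigma> \<rho> = (\<Sum>w\<in>UNIV. \<mu> w * u (\<alpha> w) w)"
  unfolding U_eq_sum_message_value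
proof (intro sum.cong refl arg_cong2[where f = times] lottery_sum_eq)
  show "lottery (\<sigma> w)" for w
    using assms(1) by (simp add: msg_strat_iff_lottery)
  show "message_value u \<rho> m w = u (\<alpha> w) w" if "\<sigma> w m \<noteq> 0" for w m
    using assms(2)[OF that] by (simp add: message_value_def)
qed

lemma sum_induced_recommendation:
  assumes "msg_strat \<sigma>" and "\<And>w m. \<sigma> w m \<noteq> 0 \<Longrightarrow> \<rho> m = dirac (\<alpha> w)"
  shows "(\<Sum>m\<in>UNIV. \<sigma> w m * \<rho> m a) = dirac (\<alpha> w) a"
proof -
  have "(\<Sum>m\<in>UNIV. \<sigma> w m * \<rho> m a) = (\<Sum>m\<in>UNIV. \<sigma> w m * dirac (\<alpha> w) a)"
    by (rule sum.cong[OF refl]) (metis assms(2) mult_zero_left)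
  also have "\<dots> = dirac (\<alpha> w) a"
    using assms(1) by (simp add: msg_strat_def flip: sum_distrib_right)
  finally show ?thesis .
qed

lemma S_BR_pure_favourite:
  assumes \<mu>: "\<And>w. 0 < \<mu> w" and best: "\<And>k w. uS (\<beta> k) w \<le> uS (\<beta> (\<kappa> w)) w"
  shows "S_BR \<mu> uS (\<lambda>w. dirac (\<kappa> w)) (\<lambda>k. dirac (\<beta> k))"
proof -
  have M: "msg_strat (\<lambda>w. dirac (\<kappa> w))"
    by (simp add: msg_strat_iff_lottery lottery_dirac)
  have "m = \<kappa> w" if "0 < dirac (\<kappa> w) m" for w m
    using that by (simp add: dirac_def split: if_splits)
  then show ?thesis
    unfolding S_BR_iff[OF M \<mu>] using best by (auto simp: message_value_def)
qed

lemma pure_equilibrium_partitional: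
  fixes \<sigma> :: "'w::finite \<Rightarrow> 'm::finite \<Rightarrow> real" and \<rho> :: "'m \<Rightarrow> 'a::finite \<Rightarrow> real"
  assumes \<mu>: "\<And>w. 0 < \<mu> w" and P: "profile \<sigma> \<rho>" and R: "R_BR \<mu> uR \<sigma> \<rho>"
    and \<alpha>: "\<And>w m. 0 < \<sigma> w m \<Longrightarrow> \<rho> m = dirac (\<alpha> w)"
    and \<alpha>_best: "\<And>w w'. uS (\<alpha> w') w \<le> uS (\<alpha> w) w"
    and card: "CARD('a) \<le> CARD('m)"
  shows "\<exists>(\<sigma>'::'w \<Rightarrow> 'm \<Rightarrow> real) \<rho>'. profile \<sigma>' \<rho>' \<and> S_BR \<mu> uS \<sigma>' \<rho>' \<and> R_BR \<mu> uR \<sigma>' \<rho>' \<and>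
     partitional \<sigma>' \<and> U \<mu> uS \<sigma>' \<rho>' = U \<mu> uS \<sigma> \<rho>"
proof -
  have M: "msg_strat \<sigma>" and A: "act_strat \<rho>"
    using P by (simp_all add: profile_def)
  have on_path: "\<rho> m = dirac (\<alpha> w)" if "\<sigma> w m \<noteq> 0" for w m
    using \<alpha>[of w m] that M by (simp add: msg_strat_iff_lottery lottery_pos_iff)
  obtain e :: "'a \<Rightarrow> 'm" where e: "inj e"
    using card card_le_inj[of "UNIV::'a set" "UNIV::'m set"] by auto
  \<comment> \<open>off-path messages are answered with an on-path action, which Sender never prefers\<close>
  define \<beta> where "\<beta> k = (if k \<in> e ` range \<alpha> then inv e k else \<alpha> undefined)" for k
  have \<beta>_e: "\<beta> (e (\<alpha> w)) = \<alpha> w" for w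
    by (simp add: \<beta>_def e)
  have \<beta>_best: "uS (\<beta> k) w \<le> uS (\<alpha> w) w" for k w
    using \<alpha>_best by (cases "k \<in> e ` range \<alpha>") (auto simp: \<beta>_def e)
  define \<sigma>' where "\<sigma>' w = dirac (e (\<alpha> w))" for w
  define \<rho>' where "\<rho>' k = dirac (\<beta> k)" for k
  have M': "msg_strat \<sigma>'" and A': "act_strat \<rho>'"
    by (simp_all add: \<sigma>'_def \<rho>'_def msg_strat_iff_lottery act_strat_iff_lottery lottery_dirac)
  have pooled: "\<sigma>' w (e a) = (\<Sum>m\<in>UNIV. \<sigma> w m * \<rho> m a)" for w a
    using sum_induced_recommendation[OF M on_path] e by (simp add: \<sigma>'_def dirac_def inj_eq)
  have "uS (\<beta> k) w \<le> uS (\<beta> (e (\<alpha> w))) w" for k w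
    using \<beta>_best by (simp add: \<beta>_e)
  then have "S_BR \<mu> uS \<sigma>' \<rho>'"
    unfolding \<sigma>'_def \<rho>'_def by (rule S_BR_pure_favourite[OF \<mu>])
  moreover have "R_BR \<mu> uR \<sigma>' \<rho>'"
  proof (rule R_BR_pooled[OF A R A'])
    fix k x assume "0 < \<rho>' k x"
    then have x: "x = \<beta> k"
      by (simp add: \<rho>'_def dirac_def split: if_splits)
    show "(\<forall>w. \<sigma>' w k = 0) \<or> (\<forall>w. \<sigma>' w k = (\<Sum>m\<in>UNIV. \<sigma> w m * \<rho> m x))"
    proof (cases "k \<in> e ` range \<alpha>")
      case True
      then obtain w1 where k: "k = e (\<alpha> w1)"
        by blast
      then show ?thesis
        using x \<beta>_e pooled by simp
    qed (auto simp: \<sigma>'_def dirac_def)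
  qed
  moreover have "partitional \<sigma>'"
    by (auto simp: partitional_def \<sigma>'_def dirac_def)
  moreover have "U \<mu> uS \<sigma>' \<rho>' = U \<mu> uS \<sigma> \<rho>"
    using U_eq_induced_actions[OF M on_path] U_eq_induced_actions[OF M', of \<rho>' \<alpha>]
    by (simp add: \<sigma>'_def \<rho>'_def dirac_def \<beta>_e split: if_splits)
  ultimately show ?thesis
    using M' A' by (intro exI[of _ \<sigma>'] exI[of _ \<rho>']) (simp add: profile_def)
qed

section \<open>Optimal cheap-talk equilibria\<close>

lemma U_le_sum_abs:
  fixes \<sigma> :: "'w::finite \<Rightarrow> 'm::finite \<Rightarrow> real" and \<rho> :: "'m \<Rightarrow> 'a::finite \<Rightarrow> real"
  assumes P: "profile \<sigma> \<rho>" and \<mu>: "\<And>w. 0 \<le> \<mu> w"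
  shows "U \<mu> u \<sigma> \<rho> \<le> (\<Sum>w\<in>UNIV. \<Sum>m\<in>(UNIV::'m set). \<Sum>a\<in>(UNIV::'a set). \<mu> w * \<bar>u a w\<bar>)"
  unfolding U_def
proof (intro sum_mono)
  fix w m a
  have "lottery (\<sigma> w)" "lottery (\<rho> m)"
    using P by (simp_all add: profile_def msg_strat_iff_lottery act_strat_iff_lottery)
  then have s: "0 \<le> \<sigma> w m" "\<sigma> w m \<le> 1" and r: "0 \<le> \<rho> m a" "\<rho> m a \<le> 1"
    by (simp_all add: lottery_nonneg lottery_le_one)
  have "\<mu> w * \<sigma> w m * \<rho> m a * u a w \<le> \<mu> w * (\<sigma> w m * \<rho> m a) * \<bar>u a w\<bar>"
    using \<mu>[of w] s r by (simp add: abs_mult mult.assoc mult_left_mono)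
  also have "\<dots> \<le> \<mu> w * 1 * \<bar>u a w\<bar>"
    using s r \<mu>[of w] by (intro mult_right_mono mult_left_mono) (auto intro: mult_le_one)
  finally show "\<mu> w * \<sigma> w m * \<rho> m a * u a w \<le> \<mu> w * \<bar>u a w\<bar>"
    by simp
qed

lemma bdd_above_U:
  fixes \<mu> :: "'w::finite \<Rightarrow> real"
  assumes "\<And>w. 0 \<le> \<mu> w"
  shows "bdd_above {U \<mu> u \<sigma> \<rho> | (\<sigma>::'w \<Rightarrow> 'm::finite \<Rightarrow> real) (\<rho>::'m \<Rightarrow> 'a::finite \<Rightarrow> real).
                      profile \<sigma> \<rho> \<and> P \<sigma> \<rho>}"
proof (rule bdd_aboveI)
  fix x assume "x \<in> {U \<mu> u \<sigma> \<rho> | (\<sigma>::'w \<Rightarrow> 'm \<Rightarrow> real) (\<rho>::'m \<Rightarrow> 'a \<Rightarrow> real). profile \<sigma> \<rho> \<and> P \<sigma> \<rho>}"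
  then obtain \<sigma> :: "'w \<Rightarrow> 'm \<Rightarrow> real" and \<rho> :: "'m \<Rightarrow> 'a \<Rightarrow> real"
    where x: "x = U \<mu> u \<sigma> \<rho>" and P: "profile \<sigma> \<rho>"
    by blast
  show "x \<le> (\<Sum>w\<in>UNIV. \<Sum>m\<in>(UNIV::'m set). \<Sum>a\<in>(UNIV::'a set). \<mu> w * \<bar>u a w\<bar>)"
    unfolding x using P assms by (rule U_le_sum_abs)
qed

lemma babbling_equilibrium_exists:
  fixes \<mu> :: "'w::finite \<Rightarrow> real"
  assumes \<mu>: "\<And>w. 0 < \<mu> w"
  shows "\<exists>(\<sigma>::'w \<Rightarrow> 'm::finite \<Rightarrow> real) (\<rho>::'m \<Rightarrow> 'a::finite \<Rightarrow> real).
           profile \<sigma> \<rho> \<and> S_BR \<mu> uS \<sigma> \<rho> \<and> R_BR \<mu> uR \<sigma> \<rho>"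
proof -
  define f where "f c = (\<Sum>w\<in>UNIV. \<mu> w * uR c w)" for c :: 'a
  have "Max (range f) \<in> range f"
    by (rule Max_in) auto
  then obtain a0 where "Max (range f) = f a0"
    by blast
  then have a0: "f c \<le> f a0" for c
    using Max_ge[of "range f" "f c"] by simp
  define \<sigma> :: "'w \<Rightarrow> 'm \<Rightarrow> real" where "\<sigma> w = dirac undefined" for w
  define \<rho> :: "'m \<Rightarrow> 'a \<Rightarrow> real" where "\<rho> m = dirac a0" for m
  have M: "msg_strat \<sigma>" and A: "act_strat \<rho>"
    by (simp_all add: \<sigma>_def \<rho>_def msg_strat_iff_lottery act_strat_iff_lottery lottery_dirac)
  have "S_BR \<mu> uS \<sigma> \<rho>"
    unfolding S_BR_iff[OF M \<mu>] by (simp add: message_value_def \<rho>_def)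
  moreover have "R_BR \<mu> uR \<sigma> \<rho>"
    unfolding R_BR_iff[OF A] using a0
    by (auto simp: f_def \<rho>_def \<sigma>_def action_value_def dirac_def mult.assoc simp flip: sum_distrib_left)
  ultimately show ?thesis
    using M A by (auto simp: profile_def)
qed

(* Strategy pairs are encoded as pairs of vectors to obtain a compact subset of a Euclidean space. *)
lemma compact_equilibrium_set:
  fixes \<mu> :: "'w::finite \<Rightarrow> real" and uS uR :: "'a::finite \<Rightarrow> 'w \<Rightarrow> real"
  shows "compact {z :: (real^('w \<times> 'm::finite)) \<times> (real^('m \<times> 'a)).
    profile (\<lambda>w m. fst z $ (w, m)) (\<lambda>m a. snd z $ (m, a)) \<and>
    S_BR \<mu> uS (\<lambda>w m. fst z $ (w, m)) (\<lambda>m a. snd z $ (m, a)) \<and>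
    R_BR \<mu> uR (\<lambda>w m. fst z $ (w, m)) (\<lambda>m a. snd z $ (m, a))}" (is "compact ?K")
proof -
  have closed: "closed ?K"
    unfolding profile_def msg_strat_def act_strat_def S_BR_def R_BR_def U_def
    by (intro closed_Collect_conj closed_Collect_all closed_Collect_imp closed_Collect_le
        closed_Collect_eq continuous_intros open_Collect_const)
  have sub: "?K \<subseteq> cbox 0 1 \<times> cbox 0 1"
  proof
    fix z assume "z \<in> ?K"
    then have "\<forall>w. lottery (\<lambda>m. fst z $ (w, m))" "\<forall>m. lottery (\<lambda>a. snd z $ (m, a))"
      by (simp_all add: profile_def msg_strat_iff_lottery act_strat_iff_lottery)
    then have "0 \<le> fst z $ (w, m) \<and> fst z $ (w, m) \<le> 1" "0 \<le> snd z $ (m, a) \<and> snd z $ (m, a) \<le> 1"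
      for w m a
      using lottery_nonneg lottery_le_one by metis+
    then show "z \<in> cbox 0 1 \<times> cbox 0 1"
      unfolding mem_Times_iff mem_box_cart by auto
  qed
  have "bounded ?K"
    by (rule bounded_subset[OF bounded_Times[OF bounded_cbox bounded_cbox] sub])
  with closed show ?thesis
    by (simp add: compact_eq_bounded_closed)
qed

lemma cheap_talk_optimum_exists:
  fixes \<mu> :: "'w::finite \<Rightarrow> real" and uS uR :: "'a::finite \<Rightarrow> 'w \<Rightarrow> real"
  assumes \<mu>: "\<And>w. 0 < \<mu> w"
  obtains \<sigma> :: "'w \<Rightarrow> 'm::finite \<Rightarrow> real" and \<rho> :: "'m \<Rightarrow> 'a \<Rightarrow> real"
  where "profile \<sigma> \<rho>" "S_BR \<mu> uS \<sigma> \<rho>" "R_BR \<mu> uR \<sigma> \<rho>"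
    and "\<And>(\<sigma>'::'w \<Rightarrow> 'm \<Rightarrow> real) \<rho>'. profile \<sigma>' \<rho>' \<Longrightarrow> S_BR \<mu> uS \<sigma>' \<rho>' \<Longrightarrow> R_BR \<mu> uR \<sigma>' \<rho>' \<Longrightarrow>
           U \<mu> uS \<sigma>' \<rho>' \<le> U \<mu> uS \<sigma> \<rho>"
proof -
  let ?sv = "\<lambda>z :: (real^('w \<times> 'm)) \<times> (real^('m \<times> 'a)). \<lambda>w m. fst z $ (w, m)"
  let ?rv = "\<lambda>z :: (real^('w \<times> 'm)) \<times> (real^('m \<times> 'a)). \<lambda>m a. snd z $ (m, a)"
  let ?vec = "\<lambda>(\<sigma>::'w \<Rightarrow> 'm \<Rightarrow> real) (\<rho>::'m \<Rightarrow> 'a \<Rightarrow> real). (\<chi> p. \<sigma> (fst p) (snd p), \<chi> p. \<rho> (fst p) (snd p))"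
  define K where "K = {z. profile (?sv z) (?rv z) \<and> S_BR \<mu> uS (?sv z) (?rv z) \<and> R_BR \<mu> uR (?sv z) (?rv z)}"
  have vec: "?sv (?vec \<sigma> \<rho>) = \<sigma>" "?rv (?vec \<sigma> \<rho>) = \<rho>" for \<sigma> \<rho>
    by simp_all
  have "\<exists>(\<sigma>::'w \<Rightarrow> 'm \<Rightarrow> real) (\<rho>::'m \<Rightarrow> 'a \<Rightarrow> real).
      profile \<sigma> \<rho> \<and> S_BR \<mu> uS \<sigma> \<rho> \<and> R_BR \<mu> uR \<sigma> \<rho>"
    using \<mu> by (rule babbling_equilibrium_exists)
  then obtain \<sigma>0 :: "'w \<Rightarrow> 'm \<Rightarrow> real" and \<rho>0 :: "'m \<Rightarrow> 'a \<Rightarrow> real"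
    where "profile \<sigma>0 \<rho>0 \<and> S_BR \<mu> uS \<sigma>0 \<rho>0 \<and> R_BR \<mu> uR \<sigma>0 \<rho>0"
    by blast
  then have "?vec \<sigma>0 \<rho>0 \<in> K"
    unfolding K_def vec by simp
  then have nonempty: "K \<noteq> {}"
    by blast
  have "compact K"
    unfolding K_def by (rule compact_equilibrium_set)
  moreover have "continuous_on K (\<lambda>z. U \<mu> uS (?sv z) (?rv z))"
    unfolding U_def by (intro continuous_intros)
  ultimately obtain z where z: "z \<in> K" "\<And>y. y \<in> K \<Longrightarrow> U \<mu> uS (?sv y) (?rv y) \<le> U \<mu> uS (?sv z) (?rv z)"
    using continuous_attains_sup[OF _ nonempty] by blast
  show ?thesis
  proof (rule that[of "?sv z" "?rv z"])
    show "profile (?sv z) (?rv z)" "S_BR \<mu> uS (?sv z) (?rv z)" "R_BR \<mu> uR (?sv z) (?rv z)"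
      using z(1) by (simp_all add: K_def)
    fix \<sigma>' :: "'w \<Rightarrow> 'm \<Rightarrow> real" and \<rho>'
    assume "profile \<sigma>' \<rho>'" "S_BR \<mu> uS \<sigma>' \<rho>'" "R_BR \<mu> uR \<sigma>' \<rho>'"
    then have "?vec \<sigma>' \<rho>' \<in> K"
      unfolding K_def vec by simp
    from z(2)[OF this] show "U \<mu> uS \<sigma>' \<rho>' \<le> U \<mu> uS (?sv z) (?rv z)"
      unfolding vec .
  qed
qed

lemma U_le_persuasion_payoff:
  fixes \<sigma> :: "'w::finite \<Rightarrow> 'm::finite \<Rightarrow> real" and \<rho> :: "'m \<Rightarrow> 'a::finite \<Rightarrow> real"
  assumes "\<And>w. 0 \<le> \<mu> w" and "profile \<sigma> \<rho>" and "R_BR \<mu> uR \<sigma> \<rho>"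
  shows "U \<mu> uS \<sigma> \<rho> \<le> persuasion_payoff TYPE('m) \<mu> uS uR"
  unfolding persuasion_payoff_def
  by (rule cSup_upper[OF _ bdd_above_U[where P = "R_BR \<mu> uR"]]) (use assms in auto)

lemma U_le_partitional_cheap_talk_payoff:
  fixes \<sigma> :: "'w::finite \<Rightarrow> 'm::finite \<Rightarrow> real" and \<rho> :: "'m \<Rightarrow> 'a::finite \<Rightarrow> real"
  assumes "\<And>w. 0 \<le> \<mu> w" and "profile \<sigma> \<rho>" and "S_BR \<mu> uS \<sigma> \<rho>" "R_BR \<mu> uR \<sigma> \<rho>" "partitional \<sigma>"
  shows "U \<mu> uS \<sigma> \<rho> \<le> partitional_cheap_talk_payoff TYPE('m) \<mu> uS uR"
  unfolding partitional_cheap_talk_payoff_def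
  by (rule cSup_upper[OF _ bdd_above_U[where P = "\<lambda>\<sigma> \<rho>. S_BR \<mu> uS \<sigma> \<rho> \<and> R_BR \<mu> uR \<sigma> \<rho> \<and> partitional \<sigma>"]])
     (use assms in auto)

lemma cheap_talk_payoff_eq_max:
  fixes \<sigma> :: "'w::finite \<Rightarrow> 'm::finite \<Rightarrow> real" and \<rho> :: "'m \<Rightarrow> 'a::finite \<Rightarrow> real"
  assumes "profile \<sigma> \<rho>" "S_BR \<mu> uS \<sigma> \<rho>" "R_BR \<mu> uR \<sigma> \<rho>"
    and "\<And>(\<sigma>'::'w \<Rightarrow> 'm \<Rightarrow> real) \<rho>'. profile \<sigma>' \<rho>' \<Longrightarrow> S_BR \<mu> uS \<sigma>' \<rho>' \<Longrightarrow> R_BR \<mu> uR \<sigma>' \<rho>' \<Longrightarrow>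
           U \<mu> uS \<sigma>' \<rho>' \<le> U \<mu> uS \<sigma> \<rho>"
  shows "cheap_talk_payoff TYPE('m) \<mu> uS uR = U \<mu> uS \<sigma> \<rho>"
  unfolding cheap_talk_payoff_def by (rule cSup_eq_maximum) (use assms in auto)

lemma generic_commitment_valuable_if_values_randomization:
  fixes \<mu> :: "'w::finite \<Rightarrow> real" and uS uR :: "'a::finite \<Rightarrow> 'w \<Rightarrow> real"
  assumes prior: "is_prior \<mu>" and card: "max CARD('w) CARD('a) < CARD('m::finite)"
    and g: "generic uS uR" and VR: "values_randomization TYPE('m) \<mu> uS uR"
  shows "commitment_valuable TYPE('m) \<mu> uS uR"
proof (rule ccontr)
  assume not_valuable: "\<not> commitment_valuable TYPE('m) \<mu> uS uR"
  have \<mu>: "\<And>w. 0 < \<mu> w"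
    using prior by (simp add: is_prior_def)
  then have \<mu>_nonneg: "\<And>w. 0 \<le> \<mu> w"
    by (simp add: less_imp_le)
  obtain \<sigma> :: "'w \<Rightarrow> 'm \<Rightarrow> real" and \<rho> :: "'m \<Rightarrow> 'a \<Rightarrow> real"
    where eq: "profile \<sigma> \<rho>" "S_BR \<mu> uS \<sigma> \<rho>" "R_BR \<mu> uR \<sigma> \<rho>"
      and best: "\<And>(\<sigma>'::'w \<Rightarrow> 'm \<Rightarrow> real) \<rho>'. profile \<sigma>' \<rho>' \<Longrightarrow> S_BR \<mu> uS \<sigma>' \<rho>' \<Longrightarrow>
                   R_BR \<mu> uR \<sigma>' \<rho>' \<Longrightarrow> U \<mu> uS \<sigma>' \<rho>' \<le> U \<mu> uS \<sigma> \<rho>"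
    using cheap_talk_optimum_exists[where \<mu> = \<mu> and uS = uS and uR = uR, OF \<mu>] by blast
  have M: "msg_strat \<sigma>"
    using eq(1) by (simp add: profile_def)
  have cheap: "cheap_talk_payoff TYPE('m) \<mu> uS uR = U \<mu> uS \<sigma> \<rho>"
    using eq best by (rule cheap_talk_payoff_eq_max)
  have "U \<mu> uS \<sigma>' \<rho>' \<le> U \<mu> uS \<sigma> \<rho>"
    if "profile \<sigma>' \<rho>'" "R_BR \<mu> uR \<sigma>' \<rho>'" for \<sigma>' :: "'w \<Rightarrow> 'm \<Rightarrow> real" and \<rho>'
    using U_le_persuasion_payoff[OF \<mu>_nonneg that, of uS] not_valuable cheap
    by (simp add: commitment_valuable_def)
  then have PO: "persuasion_optimal \<mu> uS uR \<sigma> \<rho>"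
    using eq by (simp add: persuasion_optimal_def)
  have pure: "\<exists>a. \<rho> m = dirac a" if "0 < \<sigma> w m" for w m
    using generic_persuasion_optimal_pure[OF \<mu> g PO _ that] card by simp
  obtain \<alpha> where \<alpha>: "\<And>w m. 0 < \<sigma> w m \<Longrightarrow> \<rho> m = dirac (\<alpha> w)"
    and \<alpha>_best: "\<And>w w'. uS (\<alpha> w') w \<le> uS (\<alpha> w) w"
    using equilibrium_induced_action[OF \<mu> M eq(2)] pure generic_sender_strict[OF g] by blast
  have "\<exists>(\<sigma>'::'w \<Rightarrow> 'm \<Rightarrow> real) \<rho>'. profile \<sigma>' \<rho>' \<and> S_BR \<mu> uS \<sigma>' \<rho>' \<and> R_BR \<mu> uR \<sigma>' \<rho>' \<and>
      partitional \<sigma>' \<and> U \<mu> uS \<sigma>' \<rho>' = U \<mu> uS \<sigma> \<rho>"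
    using \<alpha> \<alpha>_best card by (intro pure_equilibrium_partitional[OF \<mu> eq(1,3)]) auto
  then obtain \<sigma>' :: "'w \<Rightarrow> 'm \<Rightarrow> real" and \<rho>'
    where "profile \<sigma>' \<rho>'" "S_BR \<mu> uS \<sigma>' \<rho>'" "R_BR \<mu> uR \<sigma>' \<rho>'" "partitional \<sigma>'"
      and same: "U \<mu> uS \<sigma>' \<rho>' = U \<mu> uS \<sigma> \<rho>"
    by blast
  then have "U \<mu> uS \<sigma>' \<rho>' \<le> partitional_cheap_talk_payoff TYPE('m) \<mu> uS uR"
    using \<mu>_nonneg by (intro U_le_partitional_cheap_talk_payoff)
  then have "U \<mu> uS \<sigma> \<rho> \<le> partitional_cheap_talk_payoff TYPE('m) \<mu> uS uR"
    using same by simp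
  then show False
    using VR cheap by (simp add: values_randomization_def)
qed

section \<open>Non-generic environments are negligible\<close>

definition overwrite_coords :: "('w \<Rightarrow> 'i) \<Rightarrow> 'w set \<Rightarrow> ('w \<Rightarrow> real^'i \<Rightarrow> real) \<Rightarrow> real^'i::finite \<Rightarrow> real^'i" where
  "overwrite_coords g T F x = x + (\<Sum>\<omega>\<in>T. (F \<omega> x - x $ g \<omega>) *\<^sub>R axis (g \<omega>) 1)"

lemma overwrite_coords_nth_eq:
  "overwrite_coords g T F x $ i = x $ i + (\<Sum>\<omega>\<in>T. if g \<omega> = i then F \<omega> x - x $ g \<omega> else 0)"
  unfolding overwrite_coords_def
  by (simp add: sum_component axis_def if_distrib cong: if_cong) (rule sum.cong; auto)

lemma overwrite_coords_nth:
  assumes "finite T" and "inj_on g T"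
  shows "\<omega> \<in> T \<Longrightarrow> overwrite_coords g T F x $ g \<omega> = F \<omega> x"
    and "i \<notin> g ` T \<Longrightarrow> overwrite_coords g T F x $ i = x $ i"
  using assms by (auto simp: overwrite_coords_nth_eq inj_on_eq_iff sum.delta' cong: if_cong
      intro!: sum.neutral)

(* The coefficients l are stored in |C| < |T| of the overwritten coordinates g ` T, which leaves the
   coordinate g \<omega>0 free to be set to 0. *)
lemma low_rank_family_subset_overwrite_image:
  fixes g :: "'w \<Rightarrow> 'i::finite" and h :: "'w \<Rightarrow> real^'i \<Rightarrow> real"
    and v :: "'c \<Rightarrow> 'w \<Rightarrow> real^'i \<Rightarrow> real"
  assumes "finite T" and inj: "inj_on g T" and \<omega>0: "\<omega>0 \<in> T"
    and \<theta>: "\<theta> ` C \<subseteq> T - {\<omega>0}" "inj_on \<theta> C"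
    and indep: "\<And>x y \<omega>. (\<And>i. i \<notin> g ` T \<Longrightarrow> x $ i = y $ i) \<Longrightarrow>
                  h \<omega> x = h \<omega> y \<and> (\<forall>c\<in>C. v c \<omega> x = v c \<omega> y)"
  shows "{x. \<exists>l. \<forall>\<omega>\<in>T. x $ g \<omega> = h \<omega> x + (\<Sum>c\<in>C. l c * v c \<omega> x)} \<subseteq>
    overwrite_coords g T (\<lambda>\<omega> y. h \<omega> y + (\<Sum>c\<in>C. y $ g (\<theta> c) * v c \<omega> y)) `
      {y. axis (g \<omega>0) 1 \<bullet> y = 0}"
proof
  fix x assume "x \<in> {x. \<exists>l. \<forall>\<omega>\<in>T. x $ g \<omega> = h \<omega> x + (\<Sum>c\<in>C. l c * v c \<omega> x)}"
  then obtain l where l: "\<And>\<omega>. \<omega> \<in> T \<Longrightarrow> x $ g \<omega> = h \<omega> x + (\<Sum>c\<in>C. l c * v c \<omega> x)"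
    by blast
  define x' where "x' = (\<chi> i. if i \<in> g ` T then (if i \<in> (g \<circ> \<theta>) ` C then l (inv_into C (g \<circ> \<theta>) i) else 0) else x $ i)"
  have inj_g\<theta>: "inj_on (g \<circ> \<theta>) C"
    using \<theta> inj by (auto simp: inj_on_def subset_iff)
  have x'_\<theta>: "x' $ g (\<theta> c) = l c" if "c \<in> C" for c
    using that \<theta>(1) inv_into_f_f[OF inj_g\<theta> that] by (force simp: x'_def)
  have "g \<omega>0 \<notin> (g \<circ> \<theta>) ` C"
    using \<theta>(1) \<omega>0 inj by (auto simp: inj_on_def)
  then have "axis (g \<omega>0) 1 \<bullet> x' = 0"
    using \<omega>0 by (simp add: x'_def inner_axis')
  moreover have "overwrite_coords g T (\<lambda>\<omega> y. h \<omega> y + (\<Sum>c\<in>C. y $ g (\<theta> c) * v c \<omega> y)) x' = x"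
  proof (rule vec_eq_iff[THEN iffD2], intro allI)
    fix i
    have same: "h \<omega> x' = h \<omega> x \<and> (\<forall>c\<in>C. v c \<omega> x' = v c \<omega> x)" for \<omega>
      by (rule indep) (simp add: x'_def)
    show "overwrite_coords g T (\<lambda>\<omega> y. h \<omega> y + (\<Sum>c\<in>C. y $ g (\<theta> c) * v c \<omega> y)) x' $ i = x $ i"
    proof (cases "i \<in> g ` T")
      case True
      then obtain \<omega> where \<omega>: "\<omega> \<in> T" "i = g \<omega>"
        by blast
      have "(\<Sum>c\<in>C. x' $ g (\<theta> c) * v c \<omega> x') = (\<Sum>c\<in>C. l c * v c \<omega> x)"
        using same x'_\<theta> by (intro sum.cong) auto
      then show ?thesis
        using overwrite_coords_nth(1)[OF \<open>finite T\<close> inj \<omega>(1)] l[OF \<omega>(1)] \<omega>(2) same by simp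
    next
      case False
      then show ?thesis
        using overwrite_coords_nth(2)[OF \<open>finite T\<close> inj] by (simp add: x'_def)
    qed
  qed
  ultimately show "x \<in> overwrite_coords g T (\<lambda>\<omega> y. h \<omega> y + (\<Sum>c\<in>C. y $ g (\<theta> c) * v c \<omega> y)) `
      {y. axis (g \<omega>0) 1 \<bullet> y = 0}"
    by (metis (mono_tags, lifting) image_eqI mem_Collect_eq)
qed

lemma negligible_coordinates_in_low_rank_family:
  fixes g :: "'w \<Rightarrow> 'i::finite" and h :: "'w \<Rightarrow> real^'i \<Rightarrow> real"
    and v :: "'c \<Rightarrow> 'w \<Rightarrow> real^'i \<Rightarrow> real"
  assumes fin: "finite T" "finite C" and inj: "inj_on g T" and card: "card C < card T"
    and lin: "\<And>\<omega>. bounded_linear (h \<omega>)" "\<And>c \<omega>. c \<in> C \<Longrightarrow> bounded_linear (v c \<omega>)"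
    and indep: "\<And>x y \<omega>. (\<And>i. i \<notin> g ` T \<Longrightarrow> x $ i = y $ i) \<Longrightarrow>
                  h \<omega> x = h \<omega> y \<and> (\<forall>c\<in>C. v c \<omega> x = v c \<omega> y)"
  shows "negligible {x. \<exists>l. \<forall>\<omega>\<in>T. x $ g \<omega> = h \<omega> x + (\<Sum>c\<in>C. l c * v c \<omega> x)}"
proof -
  obtain \<omega>0 where \<omega>0: "\<omega>0 \<in> T"
    using card by fastforce
  have "card C \<le> card (T - {\<omega>0})"
    using card \<omega>0 fin by simp
  then obtain \<theta> where \<theta>: "\<theta> ` C \<subseteq> T - {\<omega>0}" "inj_on \<theta> C"
    using card_le_inj[OF fin(2), of "T - {\<omega>0}"] fin by auto
  define F where "F \<omega> y = h \<omega> y + (\<Sum>c\<in>C. y $ g (\<theta> c) * v c \<omega> y)" for \<omega> y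
  define S where "S = {y::real^'i. axis (g \<omega>0) 1 \<bullet> y = 0}"
  have "negligible S"
    unfolding S_def by (rule negligible_hyperplane) (simp add: axis_eq_0_iff)
  moreover have "overwrite_coords g T F differentiable_on S"
    unfolding overwrite_coords_def F_def
    by (intro differentiable_at_imp_differentiable_on ballI derivative_intros
        bounded_linear_imp_differentiable lin bounded_linear_vec_nth fin; assumption)
  ultimately have "negligible (overwrite_coords g T F ` S)"
    by (rule negligible_differentiable_image_negligible[OF order_refl])
  moreover have "{x. \<exists>l. \<forall>\<omega>\<in>T. x $ g \<omega> = h \<omega> x + (\<Sum>c\<in>C. l c * v c \<omega> x)} \<subseteq> overwrite_coords g T F ` S"
    unfolding F_def S_def using fin(1) inj \<omega>0 \<theta> indep by (rule low_rank_family_subset_overwrite_image)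
  ultimately show ?thesis
    by (rule negligible_subset)
qed

lemma in_span_image_sum:
  fixes f :: "'c \<Rightarrow> 'v::real_vector"
  assumes "finite C" and "v \<in> span (f ` C)"
  shows "\<exists>l. v = (\<Sum>c\<in>C. l c *\<^sub>R f c)"
  using assms(2)
proof (induction rule: real_vector.span_induct_alt)
  case base
  show ?case
    by (rule exI[of _ "\<lambda>_. 0"]) simp
next
  case (step r x y)
  then obtain c0 l where c0: "c0 \<in> C" "x = f c0" and l: "y = (\<Sum>c\<in>C. l c *\<^sub>R f c)"
    by blast
  have "r *\<^sub>R x + y = (\<Sum>c\<in>C. (l c + (if c = c0 then r else 0)) *\<^sub>R f c)"
    unfolding l c0(2) scaleR_add_left sum.distrib using c0(1) assms(1)
    by (simp add: if_distrib[of "\<lambda>t. t *\<^sub>R f _"] sum.delta' add.commute cong: if_cong)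
  then show ?case
    by (rule exI[of _ "\<lambda>c. l c + (if c = c0 then r else 0)"])
qed

lemma negligible_sender_gain_in_span:
  fixes T :: "'w::finite set" and C :: "'a::finite set"
  assumes "a \<noteq> b" and "card C < card T"
  shows "negligible {x :: real^(('a \<times> 'w) + ('a \<times> 'w)).
    payoff_gain (env_uS x) T b a \<in> span (payoff_gain (env_uR x) T a ` C)}"
proof (rule negligible_subset[OF negligible_coordinates_in_low_rank_family[where g = "\<lambda>w. Inl (a, w)"
      and h = "\<lambda>w x. x $ Inl (b, w)" and v = "\<lambda>c w x. x $ Inr (c, w) - x $ Inr (a, w)"]])
  show "inj_on (\<lambda>w. Inl (a, w)) T"
    by (auto simp: inj_on_def)
  show "bounded_linear (\<lambda>x::real^(('a \<times> 'w) + ('a \<times> 'w)). x $ Inl (b, w))" for w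
    by (rule bounded_linear_vec_nth)
  show "bounded_linear (\<lambda>x::real^(('a \<times> 'w) + ('a \<times> 'w)). x $ Inr (c, w) - x $ Inr (a, w))" for c w
    by (intro bounded_linear_sub bounded_linear_vec_nth)
  show "x $ Inl (b, w) = y $ Inl (b, w) \<and> (\<forall>c\<in>C. x $ Inr (c, w) - x $ Inr (a, w) = y $ Inr (c, w) - y $ Inr (a, w))"
    if xy: "\<And>i. i \<notin> (\<lambda>w. Inl (a, w)) ` T \<Longrightarrow> x $ i = y $ i"
    for x y :: "real^(('a \<times> 'w) + ('a \<times> 'w))" and w
  proof -
    have "x $ Inl (b, w) = y $ Inl (b, w)"
      using assms(1) by (intro xy) auto
    moreover have "x $ Inr (c, w) = y $ Inr (c, w)" for c
      by (intro xy) auto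
    ultimately show ?thesis
      by simp
  qed
  show "{x. payoff_gain (env_uS x) T b a \<in> span (payoff_gain (env_uR x) T a ` C)} \<subseteq>
    {x. \<exists>l. \<forall>w\<in>T. x $ Inl (a, w) = x $ Inl (b, w) + (\<Sum>c\<in>C. l c * (x $ Inr (c, w) - x $ Inr (a, w)))}"
  proof safe
    fix x :: "real^(('a \<times> 'w) + ('a \<times> 'w))"
    assume "payoff_gain (env_uS x) T b a \<in> span (payoff_gain (env_uR x) T a ` C)"
    from in_span_image_sum[OF finite this] obtain l where l: "payoff_gain (env_uS x) T b a = (\<Sum>c\<in>C. l c *\<^sub>R payoff_gain (env_uR x) T a c)"
      by blast
    have "x $ Inl (a, w) = x $ Inl (b, w) + (\<Sum>c\<in>C. l c * (x $ Inr (c, w) - x $ Inr (a, w)))" if "w \<in> T" for w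
      using arg_cong[OF l, of "\<lambda>v. v $ w"] that
      by (simp add: sum_component payoff_gain_nth env_uS_def env_uR_def algebra_simps)
    then show "\<exists>l. \<forall>w\<in>T. x $ Inl (a, w) = x $ Inl (b, w) + (\<Sum>c\<in>C. l c * (x $ Inr (c, w) - x $ Inr (a, w)))"
      by blast
  qed
qed (use assms in simp_all)

lemma negligible_receiver_gain_in_span:
  fixes T :: "'w::finite set" and C :: "'a::finite set"
  assumes "c0 \<noteq> a" and "c0 \<notin> C" and "card C < card T"
  shows "negligible {x :: real^(('a \<times> 'w) + ('a \<times> 'w)).
    payoff_gain (env_uR x) T a c0 \<in> span (payoff_gain (env_uR x) T a ` C)}"
proof (rule negligible_subset[OF negligible_coordinates_in_low_rank_family[where g = "\<lambda>w. Inr (c0, w)"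
      and h = "\<lambda>w x. x $ Inr (a, w)" and v = "\<lambda>c w x. x $ Inr (c, w) - x $ Inr (a, w)"]])
  show "inj_on (\<lambda>w. Inr (c0, w)) T"
    by (auto simp: inj_on_def)
  show "bounded_linear (\<lambda>x::real^(('a \<times> 'w) + ('a \<times> 'w)). x $ Inr (a, w))" for w
    by (rule bounded_linear_vec_nth)
  show "bounded_linear (\<lambda>x::real^(('a \<times> 'w) + ('a \<times> 'w)). x $ Inr (c, w) - x $ Inr (a, w))" for c w
    by (intro bounded_linear_sub bounded_linear_vec_nth)
  show "x $ Inr (a, w) = y $ Inr (a, w) \<and> (\<forall>c\<in>C. x $ Inr (c, w) - x $ Inr (a, w) = y $ Inr (c, w) - y $ Inr (a, w))"
    if xy: "\<And>i. i \<notin> (\<lambda>w. Inr (c0, w)) ` T \<Longrightarrow> x $ i = y $ i"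
    for x y :: "real^(('a \<times> 'w) + ('a \<times> 'w))" and w
  proof -
    have "x $ Inr (c, w) = y $ Inr (c, w)" if "c \<in> insert a C" for c
      using that assms(1,2) by (intro xy) auto
    then show ?thesis
      by simp
  qed
  show "{x. payoff_gain (env_uR x) T a c0 \<in> span (payoff_gain (env_uR x) T a ` C)} \<subseteq>
    {x. \<exists>l. \<forall>w\<in>T. x $ Inr (c0, w) = x $ Inr (a, w) + (\<Sum>c\<in>C. l c * (x $ Inr (c, w) - x $ Inr (a, w)))}"
  proof safe
    fix x :: "real^(('a \<times> 'w) + ('a \<times> 'w))"
    assume "payoff_gain (env_uR x) T a c0 \<in> span (payoff_gain (env_uR x) T a ` C)"
    from in_span_image_sum[OF finite this] obtain l where l: "payoff_gain (env_uR x) T a c0 = (\<Sum>c\<in>C. l c *\<^sub>R payoff_gain (env_uR x) T a c)"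
      by blast
    have "x $ Inr (c0, w) = x $ Inr (a, w) + (\<Sum>c\<in>C. l c * (x $ Inr (c, w) - x $ Inr (a, w)))" if "w \<in> T" for w
      using arg_cong[OF l, of "\<lambda>v. v $ w"] that
      by (simp add: sum_component payoff_gain_nth env_uR_def algebra_simps)
    then show "\<exists>l. \<forall>w\<in>T. x $ Inr (c0, w) = x $ Inr (a, w) + (\<Sum>c\<in>C. l c * (x $ Inr (c, w) - x $ Inr (a, w)))"
      by blast
  qed
qed (use assms in simp_all)

lemma negligible_not_generic:
  "negligible {x :: real^(('a::finite \<times> 'w::finite) + ('a \<times> 'w)). \<not> generic (env_uS x) (env_uR x)}"
proof (rule negligible_subset)
  let ?S = "\<lambda>(T, a, b, C). {x :: real^(('a \<times> 'w) + ('a \<times> 'w)).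
              payoff_gain (env_uS x) T b a \<in> span (payoff_gain (env_uR x) T a ` C)}"
  let ?R = "\<lambda>(T, a, c, C). {x :: real^(('a \<times> 'w) + ('a \<times> 'w)).
              payoff_gain (env_uR x) T a c \<in> span (payoff_gain (env_uR x) T a ` C)}"
  let ?PS = "{(T, a, b, C). a \<noteq> b \<and> card C < card T}"
  let ?PR = "{(T, a, c, C). c \<noteq> a \<and> c \<notin> C \<and> card C < card T}"
  show "negligible (\<Union>(?S ` ?PS) \<union> \<Union>(?R ` ?PR))"
    by (intro negligible_Un negligible_Union finite_imageI finite)
       (auto intro: negligible_sender_gain_in_span negligible_receiver_gain_in_span)
  show "{x. \<not> generic (env_uS x) (env_uR x)} \<subseteq> \<Union>(?S ` ?PS) \<union> \<Union>(?R ` ?PR)"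
    unfolding generic_def by fastforce
qed

lemma emeasure_lebesgue_unit_cube: "emeasure lebesgue (cbox (0::real^'i::finite) 1) = 1"
proof -
  have one_inner: "(1::real^'i) \<bullet> b = 1" if "b \<in> Basis" for b
    using that by (auto simp: Basis_vec_def inner_axis)
  have "emeasure lebesgue (cbox (0::real^'i) 1) = emeasure lborel (cbox (0::real^'i) 1)"
    by (simp add: emeasure_completion main_part_sets)
  also have "\<dots> = ennreal (prod ((\<bullet>) (1 - 0)) (Basis::(real^'i) set))"
    by (rule emeasure_lborel_cbox) (simp add: one_inner)
  also have "prod ((\<bullet>) (1 - 0)) (Basis::(real^'i) set) = 1"
    by (rule prod.neutral) (simp add: one_inner)
  finally show ?thesis
    by simp
qed

theorem theorem2:
  fixes \<mu>0 :: "'w::finite \<Rightarrow> real"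
  assumes "is_prior \<mu>0"
    and "CARD('m::finite) > max CARD('w) CARD('a::finite)"
  shows "\<exists>E :: (real ^ (('a \<times> 'w) + ('a \<times> 'w))) set.
           E \<subseteq> cbox 0 1 \<and> E \<in> sets lebesgue \<and> emeasure lebesgue E = 1 \<and>
           (\<forall>x\<in>E. values_randomization TYPE('m) \<mu>0 (env_uS x) (env_uR x) \<longrightarrow>
                   commitment_valuable TYPE('m) \<mu>0 (env_uS x) (env_uR x))"
proof -
  define N :: "(real ^ (('a \<times> 'w) + ('a \<times> 'w))) set"
    where "N = {x. \<not> generic (env_uS x) (env_uR x)}"
  have N: "N \<in> null_sets lebesgue"
    unfolding N_def using negligible_not_generic by (simp add: negligible_iff_null_sets)
  have cube: "cbox 0 1 \<in> sets lebesgue"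
    by (rule fmeasurableD[OF lmeasurable_cbox])
  show ?thesis
  proof (intro exI[of _ "cbox 0 1 - N"] conjI ballI impI)
    show "cbox 0 1 - N \<subseteq> cbox 0 1"
      by blast
    show "cbox 0 1 - N \<in> sets lebesgue"
      using cube N by auto
    show "emeasure lebesgue (cbox 0 1 - N) = 1"
      using emeasure_Diff_null_set[OF N cube] emeasure_lebesgue_unit_cube by simp
    fix x assume "x \<in> cbox 0 1 - N" and "values_randomization TYPE('m) \<mu>0 (env_uS x) (env_uR x)"
    then show "commitment_valuable TYPE('m) \<mu>0 (env_uS x) (env_uR x)"
      using assms by (intro generic_commitment_valuable_if_values_randomization) (auto simp: N_def)
  qed
qed

end
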